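(* Let $d\ge2$, $1\le m\le d$, $x_1,\dots,x_n\in\mathbb{R}^d$ nonzero, $X$ the $d\times n$ matrix with columns $x_t$ and $\|X\|_{2,\infty}=\max_t\|x_t\|_2$. For each $t$ let $\omega_t\sim\mathrm{Beta}(\frac m2,\frac{d-m}2)$, let $\alpha_t$ be uniform on the unit sphere of $\mathbb{R}^{d-1}$ independent of $\omega_t$, let $W_t\in\mathbb{R}^{d\times(d-1)}$ have orthonormal columns spanning the orthogonal complement of $x_t$, and set $Y_{1,t}=\omega_t^2x_tx_t^T$, $Y_{2,t}=(\omega_t-\omega_t^2)\|x_t\|_2^2W_t\alpha_t\alpha_t^TW_t^T$, $Y_{3,t}=\omega_t\sqrt{\omega_t-\omega_t^2}\,\|x_t\|_2\,(x_t\alpha_t^TW_t^T+W_t\alpha_tx_t^T)$. Let $S_{1,t}=\|x_t\|_2^2x_tx_t^T$ and $S_{2,t}=\|x_t\|_2^4I_d$. Then for every integer $p\ge2$, $k\in\{1,2,3\}$ and $t\in[n]$, $$\mathbb E\,(Y_{k,t}-\mathbb EY_{k,t})^p\preceq\frac{p!}2R_k^{p-2}A_{k,t}^2,$$ with $A_{1,t}^2=1680\frac{m^4}{d^4}S_{1,t}$, $R_1=28\frac md\|X\|_{2,\infty}^2$; $A_{2,t}^2=48\frac{m^2}{d^3}S_{2,t}$, $R_2=12\frac md\|X\|_{2,\infty}^2$; $A_{3,t}^2=15\frac{m^3}{d^3}\left(\frac2dS_{2,t}+S_{1,t}\right)$, $R_3=10\frac md\|X\|_{2,\infty}^2$.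
   Context: $\preceq$ denotes the Loewner (positive semidefinite) order on symmetric matrices. $\mathrm{Beta}(a,b)$ is the Beta distribution on $[0,1]$ with density proportional to $\omega^{a-1}(1-\omega)^{b-1}$. *)

theory Defs
  imports "HOL-Probability.Probability"
begin

definition outer :: "real^'a \<Rightarrow> real^'b \<Rightarrow> real^'b^'a" where
  "outer u v = (\<chi> i j. u $ i * v $ j)"

fun matpow :: "real^'n^'n \<Rightarrow> nat \<Rightarrow> real^'n^'n" where
  "matpow A 0 = mat 1"
| "matpow A (Suc k) = A ** matpow A k"

definition loewner_le :: "real^'n^'n \<Rightarrow> real^'n^'n \<Rightarrow> bool" where
  "loewner_le A B \<longleftrightarrow> (\<forall>v. v \<bullet> ((B - A) *v v) \<ge> 0)"

definition beta_density :: "real \<Rightarrow> real \<Rightarrow> real \<Rightarrow> ennreal" where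
  "beta_density a b w =
     ennreal (indicator {0<..<1} w * w powr (a - 1) * (1 - w) powr (b - 1) / Beta a b)"

text \<open>A random variable is Beta(a,b)-distributed.  For b = 0 (the case m = d) the
  Beta law degenerates to the point mass at 1.\<close>
definition (in prob_space) beta_distributed :: "('a \<Rightarrow> real) \<Rightarrow> real \<Rightarrow> real \<Rightarrow> bool" where
  "beta_distributed X a b \<longleftrightarrow>
     (if b = 0 then random_variable borel X \<and> (AE w in M. X w = 1)
      else distributed M lborel X (beta_density a b))"

text \<open>Uniform (normalised surface) measure on the unit sphere of real^'e,
  realised as the cone measure: push-forward of the uniform law on the unit ball
  under v \<mapsto> v/|v|.\<close>
definition uniform_sphere :: "(real^'e) measure" where
  "uniform_sphere = distr (uniform_measure lborel (ball 0 1)) borel sgn"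

definition Ymat :: "nat \<Rightarrow> real \<Rightarrow> real^'e \<Rightarrow> real^'e^'d \<Rightarrow> real^'d \<Rightarrow> real^'d^'d" where
  "Ymat k w a W x =
     (if k = 1 then (w^2) *\<^sub>R outer x x
      else if k = 2 then ((w - w^2) * norm x ^ 2) *\<^sub>R (W ** outer a a ** transpose W)
      else (w * sqrt (w - w^2) * norm x) *\<^sub>R
             (outer x a ** transpose W + W ** outer a x))"

definition S1 :: "real^'d \<Rightarrow> real^'d^'d" where
  "S1 x = (norm x ^ 2) *\<^sub>R outer x x"

definition S2 :: "real^'d \<Rightarrow> real^'d^'d" where
  "S2 x = (norm x ^ 4) *\<^sub>R mat 1"

definition Asq :: "nat \<Rightarrow> real \<Rightarrow> real \<Rightarrow> real^'d \<Rightarrow> real^'d^'d" where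
  "Asq k m d x =
     (if k = 1 then (1680 * m^4 / d^4) *\<^sub>R S1 x
      else if k = 2 then (48 * m^2 / d^3) *\<^sub>R S2 x
      else (15 * m^3 / d^3) *\<^sub>R ((2 / d) *\<^sub>R S2 x + S1 x))"

definition Rk :: "nat \<Rightarrow> real \<Rightarrow> real \<Rightarrow> real \<Rightarrow> real" where
  "Rk k m d Xn = (if k = 1 then 28 else if k = 2 then 12 else 10) * (m / d) * Xn^2"

end

theory Submission
  imports Defs
begin

text \<open>Every Y_k is a scalar function of \<omega> times a matrix built from x and b = W \<alpha>, and all
  the scalar moments that occur are controlled by the Beta recursion
  E \<omega>^(n+1) = (m/2 + n)/(d/2 + n) E \<omega>^n \<le> (m/d)(2n+1) E \<omega>^n, i.e. E \<omega>^n \<le> (m/d)^n (2n-1)!!.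
  For Y_1 = \<omega>^2 x x^T the centred p-th power is (\<omega>^2 - E \<omega>^2)^p |x|^(2p-2) x x^T.
  For Y_2, P = b b^T and Q = W W^T satisfy P^2 = PQ = QP = P and Q^2 = Q, hence
  (sP - cQ)^p = ((s-c)^p - (-c)^p) P + (-c)^p Q, and the sign and permutation symmetries of the
  uniform sphere give E \<alpha> \<alpha>^T = I/(d-1).
  Y_3 has mean zero, and N = x b^T + b x^T (with b \<perp> x a unit vector) satisfies
  N^2 = x x^T + |x|^2 b b^T and N^3 = |x|^2 N: odd powers vanish on averaging over \<alpha>, and even
  powers reduce to the moments of \<omega> \<surd>(\<omega> - \<omega>^2).\<close>

lemma (in prob_space) indep_var_compose_of_measure_product:
  fixes X :: "'a \<Rightarrow> real" and Y :: "'a \<Rightarrow> 'b::topological_space"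
    and f :: "real \<Rightarrow> real" and g :: "'b \<Rightarrow> real"
  assumes X: "X \<in> borel_measurable M" and Y: "Y \<in> borel_measurable M"
    and f: "f \<in> borel_measurable borel" and g: "g \<in> borel_measurable borel"
    and prod: "\<forall>A\<in>sets (borel :: real measure). \<forall>B\<in>sets (borel :: 'b measure).
         measure M (X -` A \<inter> Y -` B \<inter> space M)
         = measure M (X -` A \<inter> space M) * measure M (Y -` B \<inter> space M)"
  shows "indep_var borel (\<lambda>z. f (X z)) borel (\<lambda>z. g (Y z))"
proof -
  have fX: "(\<lambda>z. f (X z)) \<in> borel_measurable M" using X f by measurable
  have gY: "(\<lambda>z. g (Y z)) \<in> borel_measurable M" using Y g by measurable
  have generated: "sigma_sets (space M) {F -` A \<inter> space M | A. A \<in> sets borel}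
      = {F -` A \<inter> space M | A. A \<in> sets borel}"
    if F: "F \<in> borel_measurable M" for F :: "'a \<Rightarrow> real"
  proof -
    have "sigma_algebra (space M) (sets (vimage_algebra (space M) F borel))"
      using sets.sigma_algebra_axioms[of "vimage_algebra (space M) F borel"]
      by (simp add: space_vimage_algebra)
    moreover have "sets (vimage_algebra (space M) F borel) = {F -` A \<inter> space M | A. A \<in> sets borel}"
      by (auto simp: sets_vimage_algebra2[OF F[unfolded measurable_def, THEN CollectD, THEN conjunct1]])
    ultimately show ?thesis by (simp add: sigma_algebra.sigma_sets_eq)
  qed
  show ?thesis
    unfolding indep_var_eq indep_sets2_eq generated[OF fX] generated[OF gY]
  proof (intro conjI ballI)
    fix a b
    assume "a \<in> {(\<lambda>z. f (X z)) -` A \<inter> space M |A. A \<in> sets borel}"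
      and "b \<in> {(\<lambda>z. g (Y z)) -` B \<inter> space M |B. B \<in> sets borel}"
    then obtain A B where "A \<in> sets borel" "B \<in> sets borel"
      and "a = (\<lambda>z. f (X z)) -` A \<inter> space M" "b = (\<lambda>z. g (Y z)) -` B \<inter> space M"
      by blast
    then show "prob (a \<inter> b) = prob a * prob b"
      using prod[rule_format, of "f -` A" "g -` B"] f g
      by (simp add: measurable_sets_borel Int_assoc Int_commute Int_left_commute vimage_def)
  qed (auto intro!: measurable_sets fX gY)
qed

section \<open>Symmetries and second moments of the uniform sphere\<close>

definition signed_perm :: "('e::finite \<Rightarrow> 'e) \<Rightarrow> ('e \<Rightarrow> real) \<Rightarrow> real^'e \<Rightarrow> real^'e" where
  "signed_perm \<pi> c v = (\<chi> i. c i * v $ \<pi> i)"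

lemma prod_Basis_cart: "(\<Prod>b\<in>Basis. (x::real^'n::finite) \<bullet> b) = (\<Prod>i\<in>UNIV. x $ i)"
proof -
  have "Basis = (\<lambda>i. axis i (1::real)) ` UNIV" by (auto simp: Basis_vec_def)
  moreover have "inj (\<lambda>i. axis i (1::real))" by (auto simp: inj_def axis_eq_axis)
  ultimately show ?thesis
    by (metis (no_types, lifting) cart_eq_inner_axis prod.reindex_cong)
qed

lemma linear_signed_perm: "linear (signed_perm \<pi> c)"
  by (auto simp: linear_iff signed_perm_def vec_eq_iff algebra_simps)

lemma borel_measurable_signed_perm[measurable]: "signed_perm \<pi> c \<in> borel_measurable borel"
  using linear_conv_bounded_linear linear_signed_perm
  by (intro borel_measurable_continuous_onI linear_continuous_on) blast

lemma distr_lborel_signed_perm: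
  fixes \<pi> :: "'e::finite \<Rightarrow> 'e"
  assumes "bij \<pi>" and c: "\<And>i. c i = 1 \<or> c i = -1"
  shows "distr lborel borel (signed_perm \<pi> c) = lborel"
proof (rule lborel_eqI[symmetric])
  show "sets (distr lborel borel (signed_perm \<pi> c)) = sets borel" by simp
  fix l u :: "real^'e"
  assume le: "\<And>b. b \<in> Basis \<Longrightarrow> l \<bullet> b \<le> u \<bullet> b"
  have le_nth: "l $ i \<le> u $ i" for i
    using le[of "axis i 1"] by (auto simp: Basis_vec_def inner_axis)
  define \<rho> where "\<rho> = inv \<pi>"
  have \<rho>: "\<pi> (\<rho> j) = j" "\<rho> (\<pi> i) = i" for i j
    using assms(1) by (auto simp: \<rho>_def bij_def surj_f_inv_f inv_f_f)
  define l' :: "real^'e" where "l' = (\<chi> j. if c (\<rho> j) = 1 then l $ \<rho> j else - u $ \<rho> j)"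
  define u' :: "real^'e" where "u' = (\<chi> j. if c (\<rho> j) = 1 then u $ \<rho> j else - l $ \<rho> j)"
  have coord: "(l $ i < c i * y \<and> c i * y < u $ i) \<longleftrightarrow> (l' $ \<pi> i < y \<and> y < u' $ \<pi> i)" for i y
    using c[of i] by (auto simp: l'_def u'_def \<rho>)
  have preimage: "signed_perm \<pi> c -` box l u = box l' u'"
  proof (rule set_eqI)
    fix x
    have "x \<in> signed_perm \<pi> c -` box l u \<longleftrightarrow> (\<forall>i. l' $ \<pi> i < x $ \<pi> i \<and> x $ \<pi> i < u' $ \<pi> i)"
      by (simp add: mem_box_cart signed_perm_def coord)
    also have "\<dots> \<longleftrightarrow> (\<forall>j. l' $ j < x $ j \<and> x $ j < u' $ j)"
      by (metis \<rho>(1))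
    finally show "x \<in> signed_perm \<pi> c -` box l u \<longleftrightarrow> x \<in> box l' u'" by (simp add: mem_box_cart)
  qed
  have "(\<Prod>b\<in>Basis. (u' - l') \<bullet> b) = (\<Prod>j\<in>UNIV. (u - l) $ \<rho> j)"
    unfolding prod_Basis_cart by (intro prod.cong refl) (auto simp: u'_def l'_def)
  also have "\<dots> = (\<Prod>i\<in>UNIV. (u - l) $ i)"
  proof -
    have "bij \<rho>" using assms(1) by (simp add: \<rho>_def bij_imp_bij_inv)
    then show ?thesis by (rule prod.reindex_bij_betw[of \<rho> UNIV UNIV "\<lambda>i. (u-l)$i"])
  qed
  finally have volume: "(\<Prod>b\<in>Basis. (u' - l') \<bullet> b) = (\<Prod>b\<in>Basis. (u - l) \<bullet> b)"
    by (simp only: prod_Basis_cart)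
  have "\<forall>b\<in>Basis. l' \<bullet> b \<le> u' \<bullet> b"
    using le_nth by (auto simp: Basis_vec_def inner_axis l'_def u'_def)
  then show "emeasure (distr lborel borel (signed_perm \<pi> c)) (box l u) = (\<Prod>b\<in>Basis. (u - l) \<bullet> b)"
    by (simp add: emeasure_distr preimage emeasure_lborel_box_eq volume)
qed

lemma norm_signed_perm:
  assumes "bij \<pi>" and c: "\<And>i. c i = 1 \<or> c i = -1"
  shows "norm (signed_perm \<pi> c v) = norm v"
proof -
  have c2: "(c i)^2 = 1" for i using c[of i] by auto
  have "signed_perm \<pi> c v \<bullet> signed_perm \<pi> c v = (\<Sum>i\<in>UNIV. (v $ \<pi> i)^2)"
    unfolding inner_vec_def signed_perm_def
    by (intro sum.cong) (simp_all add: power2_eq_square[symmetric] power_mult_distrib c2)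
  also have "\<dots> = (\<Sum>i\<in>UNIV. (v $ i)^2)"
    using sum.reindex_bij_betw[of \<pi> UNIV UNIV "\<lambda>i. (v$i)^2"] assms(1) by simp
  also have "\<dots> = v \<bullet> v" by (simp add: inner_vec_def power2_eq_square)
  finally show ?thesis by (simp add: norm_eq_sqrt_inner)
qed

lemma sgn_signed_perm:
  assumes "bij \<pi>" and "\<And>i. c i = 1 \<or> c i = -1"
  shows "sgn (signed_perm \<pi> c v) = signed_perm \<pi> c (sgn v)"
  by (simp add: sgn_div_norm norm_signed_perm[OF assms]) (simp add: signed_perm_def vec_eq_iff)

abbreviation unit_ball_uniform :: "(real^'e::finite) measure" where
  "unit_ball_uniform \<equiv> uniform_measure lborel (ball 0 1)"

lemma prob_space_unit_ball_uniform: "prob_space unit_ball_uniform"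
proof (rule prob_space_uniform_measure)
  show "emeasure lborel (ball (0::real^'e) 1) \<noteq> 0"
    using content_ball_pos[of 1 "0::real^'e"] by (auto simp: measure_def)
  show "emeasure lborel (ball (0::real^'e) 1) \<noteq> \<infinity>"
    using emeasure_lborel_ball_finite by (metis less_irrefl)
qed

lemma prob_space_uniform_sphere: "prob_space (uniform_sphere :: (real^'e::finite) measure)"
  unfolding uniform_sphere_def
  by (rule prob_space.prob_space_distr[OF prob_space_unit_ball_uniform]) simp

lemma distr_unit_ball_uniform_signed_perm:
  assumes "bij \<pi>" and "\<And>i. c i = 1 \<or> c i = -1"
  shows "distr unit_ball_uniform borel (signed_perm \<pi> c) = (unit_ball_uniform :: (real^'e::finite) measure)"
proof (rule measure_eqI)
  show "sets (distr unit_ball_uniform borel (signed_perm \<pi> c)) = sets (unit_ball_uniform :: (real^'e) measure)"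
    by simp
  fix B :: "(real^'e) set" assume "B \<in> sets (distr unit_ball_uniform borel (signed_perm \<pi> c))"
  then have B: "B \<in> sets borel" by simp
  let ?T = "signed_perm \<pi> c"
  have preimage: "?T -` (ball 0 1 \<inter> B) = ball 0 1 \<inter> ?T -` B"
    using norm_signed_perm[OF assms] by auto
  have TB: "?T -` B \<in> sets lborel" using measurable_sets_borel[OF borel_measurable_signed_perm B] by simp
  have "emeasure (distr unit_ball_uniform borel ?T) B = emeasure unit_ball_uniform (?T -` B)"
    by (subst emeasure_distr) (simp_all add: B)
  also have "\<dots> = emeasure lborel (ball 0 1 \<inter> ?T -` B) / emeasure lborel (ball (0::real^'e) 1)"
    by (rule emeasure_uniform_measure[OF _ TB]) simp
  also have "emeasure lborel (ball 0 1 \<inter> ?T -` B) = emeasure (distr lborel borel ?T) (ball 0 1 \<inter> B)"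
    using emeasure_distr[of ?T lborel borel "ball 0 1 \<inter> B"] B preimage by simp
  also have "\<dots> = emeasure lborel (ball 0 1 \<inter> B)" by (simp only: distr_lborel_signed_perm[OF assms])
  also have "emeasure lborel (ball 0 1 \<inter> B) / emeasure lborel (ball (0::real^'e) 1) = emeasure unit_ball_uniform B"
    by (rule emeasure_uniform_measure[symmetric]) (simp_all add: B)
  finally show "emeasure (distr unit_ball_uniform borel ?T) B = emeasure unit_ball_uniform B" .
qed

lemma distr_uniform_sphere_signed_perm:
  assumes "bij \<pi>" and "\<And>i. c i = 1 \<or> c i = -1"
  shows "distr uniform_sphere borel (signed_perm \<pi> c) = (uniform_sphere :: (real^'e::finite) measure)"
proof -
  let ?T = "signed_perm \<pi> c" and ?U = "unit_ball_uniform :: (real^'e) measure"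
  have "distr uniform_sphere borel ?T = distr ?U borel (?T \<circ> sgn)"
    unfolding uniform_sphere_def by (rule distr_distr) simp_all
  also have "?T \<circ> sgn = sgn \<circ> ?T" using sgn_signed_perm[OF assms] by auto
  also have "distr ?U borel (sgn \<circ> ?T) = distr (distr ?U borel ?T) borel sgn"
    by (rule distr_distr[symmetric]) simp_all
  also have "\<dots> = uniform_sphere"
    by (simp add: distr_unit_ball_uniform_signed_perm[OF assms] uniform_sphere_def)
  finally show ?thesis .
qed

lemma integral_uniform_sphere_signed_perm:
  fixes h :: "real^'e::finite \<Rightarrow> real"
  assumes "bij \<pi>" and "\<And>i. c i = 1 \<or> c i = -1" and h: "h \<in> borel_measurable borel"
  shows "integral\<^sup>L uniform_sphere (\<lambda>a. h (signed_perm \<pi> c a)) = integral\<^sup>L uniform_sphere h"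
proof -
  have "integral\<^sup>L (distr uniform_sphere borel (signed_perm \<pi> c)) h
      = integral\<^sup>L uniform_sphere (\<lambda>a. h (signed_perm \<pi> c a))"
    by (rule integral_distr[OF _ h]) (simp add: uniform_sphere_def)
  then show ?thesis by (simp add: distr_uniform_sphere_signed_perm[OF assms(1,2)])
qed

lemma AE_uniform_sphere_norm: "AE a in (uniform_sphere :: (real^'e::finite) measure). norm a = 1"
proof -
  have "AE v in (unit_ball_uniform :: (real^'e) measure). norm (sgn v) = 1"
    by (rule AE_uniform_measureI)
       (auto intro: AE_mp[OF AE_lborel_singleton[of 0]] simp: norm_sgn)
  then show ?thesis unfolding uniform_sphere_def
    using borel_measurable_sgn by (subst AE_distr_iff) auto
qed

lemma integrable_uniform_sphere_bounded:
  fixes f :: "real^'e::finite \<Rightarrow> real"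
  assumes "f \<in> borel_measurable borel" and "\<And>a. norm a = 1 \<Longrightarrow> \<bar>f a\<bar> \<le> B"
  shows "integrable uniform_sphere f"
proof -
  interpret prob_space "uniform_sphere :: (real^'e) measure" by (rule prob_space_uniform_sphere)
  show ?thesis
    by (rule integrable_const_bound[where B=B])
       (use AE_uniform_sphere_norm assms in \<open>auto simp: uniform_sphere_def elim!: AE_mp\<close>)
qed

lemma integrable_uniform_sphere_coord_mult:
  "integrable uniform_sphere (\<lambda>a::real^'e::finite. a $ i * a $ j)"
proof (rule integrable_uniform_sphere_bounded[where B=1])
  fix a :: "real^'e" assume "norm a = 1"
  then show "\<bar>a $ i * a $ j\<bar> \<le> 1"
    using component_le_norm_cart[of a i] component_le_norm_cart[of a j]
    by (simp add: abs_mult mult_le_one)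
qed simp

lemma uniform_sphere_inner_mean: "integral\<^sup>L uniform_sphere (\<lambda>a::real^'e::finite. a \<bullet> u) = 0"
proof -
  have flip_coord: "integral\<^sup>L uniform_sphere (\<lambda>a::real^'e. a $ i) = 0" for i
  proof -
    let ?c = "(\<lambda>_. 1)(i := -1)"
    have "integral\<^sup>L uniform_sphere (\<lambda>a::real^'e. signed_perm id ?c a $ i)
        = integral\<^sup>L uniform_sphere (\<lambda>a::real^'e. a $ i)"
      by (rule integral_uniform_sphere_signed_perm[OF bij_id]) auto
    then show ?thesis by (simp add: signed_perm_def)
  qed
  have integrable: "integrable uniform_sphere (\<lambda>a::real^'e. a $ i)" for i
  proof (rule integrable_uniform_sphere_bounded[where B=1])
    fix a :: "real^'e" assume "norm a = 1"
    then show "\<bar>a $ i\<bar> \<le> 1" using component_le_norm_cart[of a i] by simp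
  qed simp
  have "integral\<^sup>L uniform_sphere (\<lambda>a::real^'e. a \<bullet> u)
      = (\<Sum>i\<in>UNIV. integral\<^sup>L uniform_sphere (\<lambda>a::real^'e. a $ i * u $ i))"
    by (simp add: inner_vec_def integrable)
  also have "\<dots> = 0" by (simp add: flip_coord)
  finally show ?thesis .
qed

lemma uniform_sphere_coord_mult:
  "integral\<^sup>L uniform_sphere (\<lambda>a::real^'e::finite. a $ i * a $ j) = (if i = j then 1 / CARD('e) else 0)"
proof -
  have cross: "integral\<^sup>L uniform_sphere (\<lambda>a::real^'e. a $ i * a $ j) = 0" if "i \<noteq> j" for i j
  proof -
    let ?c = "(\<lambda>_. 1)(i := -1)"
    have "integral\<^sup>L uniform_sphere (\<lambda>a::real^'e. signed_perm id ?c a $ i * signed_perm id ?c a $ j)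
        = integral\<^sup>L uniform_sphere (\<lambda>a::real^'e. a $ i * a $ j)"
      by (rule integral_uniform_sphere_signed_perm[OF bij_id]) auto
    then show ?thesis using that by (simp add: signed_perm_def)
  qed
  have square_eq: "integral\<^sup>L uniform_sphere (\<lambda>a::real^'e. a $ j * a $ j)
      = integral\<^sup>L uniform_sphere (\<lambda>a::real^'e. a $ i * a $ i)" for i j
  proof -
    let ?\<pi> = "id(i := j, j := i)"
    have "bij ?\<pi>" by (rule o_bij[of ?\<pi>]) (auto simp: fun_eq_iff)
    then have "integral\<^sup>L uniform_sphere (\<lambda>a::real^'e. signed_perm ?\<pi> (\<lambda>_. 1) a $ i * signed_perm ?\<pi> (\<lambda>_. 1) a $ i)
        = integral\<^sup>L uniform_sphere (\<lambda>a::real^'e. a $ i * a $ i)"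
      by (rule integral_uniform_sphere_signed_perm) simp_all
    then show ?thesis by (cases "i = j") (simp_all add: signed_perm_def)
  qed
  interpret prob_space "uniform_sphere :: (real^'e) measure" by (rule prob_space_uniform_sphere)
  have "(\<Sum>j\<in>UNIV. integral\<^sup>L uniform_sphere (\<lambda>a::real^'e. a $ j * a $ j))
      = integral\<^sup>L uniform_sphere (\<lambda>a::real^'e. \<Sum>j\<in>UNIV. a $ j * a $ j)"
    by (simp add: integrable_uniform_sphere_coord_mult)
  also have "\<dots> = integral\<^sup>L uniform_sphere (\<lambda>a::real^'e. 1)"
  proof (rule integral_cong_AE)
    show "AE a in uniform_sphere. (\<Sum>j\<in>UNIV. a $ j * a $ j) = (1::real)"
      using AE_uniform_sphere_norm by (rule AE_mp) (auto simp: norm_eq_sqrt_inner inner_vec_def)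
  qed (simp_all add: uniform_sphere_def)
  also have "\<dots> = 1" using prob_space by simp
  finally have "(\<Sum>j\<in>UNIV. integral\<^sup>L uniform_sphere (\<lambda>a::real^'e. a $ j * a $ j)) = 1" .
  moreover have "(\<Sum>j\<in>UNIV. integral\<^sup>L uniform_sphere (\<lambda>a::real^'e. a $ j * a $ j))
      = (\<Sum>j\<in>(UNIV::'e set). integral\<^sup>L uniform_sphere (\<lambda>a::real^'e. a $ i * a $ i))"
    by (rule sum.cong[OF refl square_eq])
  ultimately have "real CARD('e) * integral\<^sup>L uniform_sphere (\<lambda>a::real^'e. a $ i * a $ i) = 1"
    by simp
  then show ?thesis using cross by (cases "i = j") (simp_all add: field_simps)
qed

lemma uniform_sphere_inner_inner:
  "integral\<^sup>L uniform_sphere (\<lambda>a::real^'e::finite. (a \<bullet> u) * (a \<bullet> w)) = (u \<bullet> w) / CARD('e)"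
proof -
  have "integral\<^sup>L uniform_sphere (\<lambda>a::real^'e. (a \<bullet> u) * (a \<bullet> w))
      = integral\<^sup>L uniform_sphere (\<lambda>a::real^'e. \<Sum>i\<in>UNIV. \<Sum>j\<in>UNIV. u $ i * w $ j * (a $ i * a $ j))"
    by (simp add: inner_vec_def sum_product algebra_simps)
  also have "\<dots> = (\<Sum>i\<in>UNIV. \<Sum>j\<in>UNIV. u $ i * w $ j * integral\<^sup>L uniform_sphere (\<lambda>a::real^'e. a $ i * a $ j))"
    by (simp add: integrable_uniform_sphere_coord_mult integrable_sum)
  also have "\<dots> = (\<Sum>i\<in>UNIV. u $ i * w $ i / CARD('e))"
    by (simp add: uniform_sphere_coord_mult if_distrib cong: if_cong)
  also have "\<dots> = (u \<bullet> w) / CARD('e)" by (simp add: inner_vec_def sum_divide_distrib)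
  finally show ?thesis .
qed

section \<open>Moments of the Beta distribution\<close>

lemma Beta_real_pos: "a > 0 \<Longrightarrow> b > 0 \<Longrightarrow> Beta a b > (0::real)"
  by (simp add: Beta_def Gamma_real_pos)

definition beta_pdf :: "real \<Rightarrow> real \<Rightarrow> real \<Rightarrow> real" where
  "beta_pdf a b w = indicator {0<..<1} w * w powr (a - 1) * (1 - w) powr (b - 1) / Beta a b"

lemma borel_measurable_beta_pdf[measurable]: "beta_pdf a b \<in> borel_measurable borel"
  unfolding beta_pdf_def by measurable

lemma beta_pdf_nonneg: "a > 0 \<Longrightarrow> b > 0 \<Longrightarrow> beta_pdf a b w \<ge> 0"
  unfolding beta_pdf_def using Beta_real_pos[of a b] by (auto simp: indicator_def)

lemma beta_density_eq_beta_pdf: "beta_density a b = (\<lambda>w. ennreal (beta_pdf a b w))"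
  by (simp add: beta_density_def beta_pdf_def fun_eq_iff)

lemma integral_beta_pdf_power:
  assumes a: "a > 0" and b: "b > 0"
  shows "integral\<^sup>L lborel (\<lambda>w. beta_pdf a b w * w ^ n) = Beta (a + real n) b / Beta a b"
proof -
  let ?G = "\<lambda>t. t powr (a + real n - 1) * (1 - t) powr (b - 1)"
  have "(?G has_integral Beta (a + real n) b) {0..1}"
    by (rule has_integral_Beta_real) (use a b in auto)
  then have "((\<lambda>t. if t \<in> {0..1} then ?G t else 0) has_integral Beta (a + real n) b) UNIV"
    by (simp only: has_integral_restrict_UNIV)
  then have G: "((\<lambda>t. indicator {0<..<1} t * ?G t) has_integral Beta (a + real n) b) UNIV"
  proof (rule has_integral_spike[rotated 2])
    show "negligible {0, 1::real}" by simp
  qed (auto simp: indicator_def)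
  have B: "Beta a b > 0" using Beta_real_pos[OF a b] .
  have eq: "beta_pdf a b w * w ^ n = indicator {0<..<1} w * ?G w / Beta a b" for w
  proof (cases "w \<in> {0<..<1}")
    case True
    then have "w powr (a - 1) * w ^ n = w powr (a + real n - 1)"
      by (simp add: powr_add[symmetric] powr_realpow[symmetric] algebra_simps)
    then show ?thesis using True by (simp add: beta_pdf_def)
  qed (auto simp: beta_pdf_def indicator_def)
  have nonneg: "0 \<le> beta_pdf a b w * w ^ n" for w
    using eq[of w] B a b by (auto simp: indicator_def intro!: divide_nonneg_pos)
  have "((\<lambda>w. beta_pdf a b w * w ^ n) has_integral Beta (a + real n) b / Beta a b) UNIV"
    unfolding eq using has_integral_divide[OF G] by simp
  then have "integral\<^sup>N lborel (\<lambda>w. beta_pdf a b w * w ^ n) = Beta (a + real n) b / Beta a b"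
    by (rule nn_integral_has_integral_lborel[OF _ nonneg, rotated]) measurable
  moreover have "integral\<^sup>L lborel (\<lambda>w. beta_pdf a b w * w ^ n)
      = enn2real (integral\<^sup>N lborel (\<lambda>w. ennreal (beta_pdf a b w * w ^ n)))"
    by (rule integral_eq_nn_integral) (auto simp: nonneg)
  moreover have "Beta (a + real n) b \<ge> 0" using Beta_real_pos[of "a + real n" b] a b by simp
  ultimately show ?thesis using B by simp
qed

context prob_space
begin

lemma beta_distributed_measurable:
  "beta_distributed X a b \<Longrightarrow> X \<in> borel_measurable M"
  unfolding beta_distributed_def by (auto split: if_splits dest: distributed_measurable)

lemma beta_distributed_AE_unit_interval:
  assumes "beta_distributed X a b" and "b \<ge> 0"
  shows "AE z in M. 0 \<le> X z \<and> X z \<le> 1"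
proof (cases "b = 0")
  case True
  then show ?thesis using assms by (auto simp: beta_distributed_def elim: AE_mp)
next
  case False
  then have d: "distributed M lborel X (beta_density a b)" using assms by (simp add: beta_distributed_def)
  have X: "X \<in> measurable M lborel" using distributed_measurable[OF d] by simp
  have "AE w in density lborel (beta_density a b). 0 \<le> w \<and> w \<le> 1"
    unfolding beta_density_eq_beta_pdf by (subst AE_density) (auto simp: beta_pdf_def indicator_def)
  then have "AE w in distr M lborel X. 0 \<le> w \<and> w \<le> 1"
    by (simp only: distributed_distr_eq_density[OF d])
  then show ?thesis by (subst (asm) AE_distr_iff[OF X]) auto
qed

lemma beta_moment:
  assumes "beta_distributed X a b" and a: "a > 0" and b: "b \<ge> 0"
  shows "expectation (\<lambda>z. X z ^ n) = (if b = 0 then 1 else Beta (a + real n) b / Beta a b)"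
proof (cases "b = 0")
  case True
  then have "AE z in M. X z = 1" using assms by (simp add: beta_distributed_def)
  then have "expectation (\<lambda>z. X z ^ n) = expectation (\<lambda>z. 1)"
    by (intro integral_cong_AE)
       (auto elim: AE_mp intro!: borel_measurable_power beta_distributed_measurable[OF assms(1)])
  then show ?thesis using True prob_space by simp
next
  case False
  then have b': "b > 0" using b by simp
  then have d: "distributed M lborel X (beta_density a b)" using assms by (simp add: beta_distributed_def)
  have X: "X \<in> measurable M lborel" using distributed_measurable[OF d] by simp
  have "expectation (\<lambda>z. X z ^ n) = integral\<^sup>L (distr M lborel X) (\<lambda>w. w ^ n)"
    by (rule integral_distr[OF X, symmetric]) simp
  also have "\<dots> = integral\<^sup>L (density lborel (\<lambda>w. ennreal (beta_pdf a b w))) (\<lambda>w. w ^ n)"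
    using distributed_distr_eq_density[OF d] by (simp add: beta_density_eq_beta_pdf)
  also have "\<dots> = integral\<^sup>L lborel (\<lambda>w. beta_pdf a b w * w ^ n)"
    by (subst integral_density) (auto simp: beta_pdf_nonneg a b')
  also have "\<dots> = Beta (a + real n) b / Beta a b" by (rule integral_beta_pdf_power[OF a b'])
  finally show ?thesis using False by simp
qed

lemma beta_moment_Suc:
  assumes "beta_distributed X a b" and a: "a > 0" and b: "b \<ge> 0"
  shows "expectation (\<lambda>z. X z ^ Suc n) = (a + n) / (a + b + n) * expectation (\<lambda>z. X z ^ n)"
proof (cases "b = 0")
  case True
  then show ?thesis using beta_moment[OF assms, of n] beta_moment[OF assms, of "Suc n"] a by simp
next
  case False
  have "a + real n \<notin> \<int>\<^sub>\<le>\<^sub>0" using a nonpos_Ints_nonpos[of "a + real n"] by force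
  then have "(a + real n + b) * Beta (a + real n + 1) b = (a + real n) * Beta (a + real n) b"
    by (rule Beta_plus1_left)
  moreover have "a + real n + b > 0" using a b by simp
  ultimately have "Beta (a + real (Suc n)) b = (a + real n) / (a + b + real n) * Beta (a + real n) b"
    by (simp add: field_simps)
  then show ?thesis using beta_moment[OF assms, of n] beta_moment[OF assms, of "Suc n"] False
    by simp
qed

end

section \<open>Scalar moment bounds\<close>

definition odd_dfact :: "nat \<Rightarrow> real" where
  "odd_dfact n = (\<Prod>l<n. 2 * real l + 1)"

lemma odd_dfact_Suc: "odd_dfact (Suc n) = (2 * real n + 1) * odd_dfact n"
  by (simp add: odd_dfact_def)

lemma odd_dfact_pos: "odd_dfact n > 0"
  by (simp add: odd_dfact_def prod_pos)

lemma odd_dfact_plus_power3_le: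
  "p \<ge> 2 \<Longrightarrow> odd_dfact (p + 2) + 3 ^ p \<le> 840 * 28 ^ (p - 2) * fact p"
proof (induction p rule: nat_induct_at_least)
  case base then show ?case by (simp add: odd_dfact_def eval_nat_numeral)
next
  case (Suc n)
  have "odd_dfact (Suc n + 2) \<le> 28 * real (Suc n) * odd_dfact (n + 2)"
    unfolding add_Suc odd_dfact_Suc
    using odd_dfact_pos[of "n + 2"] Suc.hyps by (intro mult_right_mono) auto
  moreover have "(3::real) ^ Suc n \<le> 28 * real (Suc n) * 3 ^ n" by simp
  ultimately have "odd_dfact (Suc n + 2) + 3 ^ Suc n \<le> 28 * real (Suc n) * (odd_dfact (n + 2) + 3 ^ n)"
    by (simp only: distrib_left add_mono)
  also have "\<dots> \<le> 28 * real (Suc n) * (840 * 28 ^ (n - 2) * fact n)"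
    using Suc.IH by (intro mult_left_mono) auto
  also have "\<dots> = 840 * 28 ^ (Suc n - 2) * fact (Suc n)"
  proof -
    have "Suc n - 2 = Suc (n - 2)" using Suc.hyps by simp
    then show ?thesis by (simp add: algebra_simps)
  qed
  finally show ?case .
qed

lemma odd_dfact_plus_2_le: "p \<ge> 2 \<Longrightarrow> odd_dfact p + 2 \<le> 12 * 12 ^ (p - 2) * fact p"
proof (induction p rule: nat_induct_at_least)
  case base then show ?case by (simp add: odd_dfact_def eval_nat_numeral)
next
  case (Suc n)
  have "odd_dfact (Suc n) \<le> 12 * real (Suc n) * odd_dfact n"
    unfolding odd_dfact_Suc using odd_dfact_pos[of n] by (intro mult_right_mono) auto
  then have "odd_dfact (Suc n) + 2 \<le> 12 * real (Suc n) * (odd_dfact n + 2)"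
    by (simp add: distrib_left)
  also have "\<dots> \<le> 12 * real (Suc n) * (12 * 12 ^ (n - 2) * fact n)"
    using Suc.IH by (intro mult_left_mono) auto
  also have "\<dots> = 12 * 12 ^ (Suc n - 2) * fact (Suc n)"
  proof -
    have "Suc n - 2 = Suc (n - 2)" using Suc.hyps by simp
    then show ?thesis by (simp add: algebra_simps)
  qed
  finally show ?case .
qed

lemma odd_dfact_Suc_le: "p \<ge> 2 \<Longrightarrow> 2 * odd_dfact (p + 1) \<le> 15 * 10 ^ (p - 2) * fact p"
proof (induction p rule: nat_induct_at_least)
  case base then show ?case by (simp add: odd_dfact_def eval_nat_numeral)
next
  case (Suc n)
  have "odd_dfact (Suc n + 1) \<le> 10 * real (Suc n) * odd_dfact (n + 1)"
    unfolding add_Suc odd_dfact_Suc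
    using odd_dfact_pos[of "n + 1"] Suc.hyps by (intro mult_right_mono) auto
  then have "2 * odd_dfact (Suc n + 1) \<le> 10 * real (Suc n) * (2 * odd_dfact (n + 1))"
    by simp
  also have "\<dots> \<le> 10 * real (Suc n) * (15 * 10 ^ (n - 2) * fact n)"
    using Suc.IH by (intro mult_left_mono) auto
  also have "\<dots> = 15 * 10 ^ (Suc n - 2) * fact (Suc n)"
  proof -
    have "Suc n - 2 = Suc (n - 2)" using Suc.hyps by simp
    then show ?thesis by (simp add: algebra_simps)
  qed
  finally show ?case .
qed

lemma continuous_on_bounded_on_compact:
  fixes f :: "'x::topological_space \<Rightarrow> 'b::real_normed_vector"
  assumes "continuous_on UNIV f" "compact K"
  shows "\<exists>B. \<forall>x\<in>K. norm (f x) \<le> B"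
proof -
  have "compact (f ` K)"
    by (rule compact_continuous_image[OF continuous_on_subset[OF assms(1)] assms(2)]) simp
  then show ?thesis using compact_imp_bounded bounded_iff by (metis image_eqI)
qed

lemma power_diff_le_power_add:
  fixes a c :: real
  assumes "0 \<le> a" "0 \<le> c"
  shows "(a - c) ^ p \<le> a ^ p + c ^ p"
proof -
  have "(a - c) ^ p \<le> \<bar>a - c\<bar> ^ p" by (metis abs_ge_self power_abs)
  also have "\<dots> \<le> (max a c) ^ p" using assms by (intro power_mono) (auto simp: abs_if max_def)
  also have "\<dots> \<le> a ^ p + c ^ p" using assms by (auto simp: max_def)
  finally show ?thesis .
qed

text \<open>The parameter D stands for the ambient dimension d.\<close>

locale beta_moment_recursion = prob_space +
  fixes X :: "'a \<Rightarrow> real" and m D :: nat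
  assumes X_measurable[measurable]: "X \<in> borel_measurable M"
    and X_unit_interval: "AE z in M. 0 \<le> X z \<and> X z \<le> 1"
    and moment_Suc: "\<And>n. expectation (\<lambda>z. X z ^ Suc n)
          = (real m/2 + n)/(real m/2 + (real D - real m)/2 + n) * expectation (\<lambda>z. X z ^ n)"
    and m_pos: "1 \<le> m" and m_le_D: "m \<le> D" and D_ge_2: "2 \<le> D"
begin

definition q :: real where "q = real m / real D"

lemma q_pos: "q > 0" and q_le_1: "q \<le> 1"
  using m_pos m_le_D D_ge_2 by (auto simp: q_def)

lemma integrable_continuous_X:
  fixes f :: "real \<Rightarrow> real"
  assumes "continuous_on UNIV f"
  shows "integrable M (\<lambda>z. f (X z))"
proof -
  obtain B where B: "\<forall>x\<in>{0..1}. norm (f x) \<le> B"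
    using continuous_on_bounded_on_compact[OF assms compact_Icc] by blast
  have "f \<in> borel_measurable borel" by (rule borel_measurable_continuous_onI[OF assms])
  then show ?thesis
    by (intro integrable_const_bound[where B=B]) (use X_unit_interval B in \<open>auto elim: AE_mp\<close>)
qed

lemma moment_nonneg: "expectation (\<lambda>z. X z ^ n) \<ge> 0"
  by (rule integral_nonneg_AE) (use X_unit_interval in \<open>auto elim: AE_mp\<close>)

lemma moment_le_odd_dfact: "expectation (\<lambda>z. X z ^ n) \<le> q ^ n * odd_dfact n"
proof (induction n)
  case 0 then show ?case by (simp add: odd_dfact_def prob_space)
next
  case (Suc n)
  have ratio: "(real m/2 + n)/(real m/2 + (real D - real m)/2 + n) \<le> q * (2 * real n + 1)"
  proof -
    have "(real m/2 + n)/(real m/2 + (real D - real m)/2 + n) = (real m/2 + n) / (real D/2 + n)"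
      by (simp add: field_simps)
    also have "\<dots> \<le> (real m/2 + n) / (real D/2)"
      using D_ge_2 by (intro divide_left_mono) auto
    also have "\<dots> = (real m + 2*n) / real D" using D_ge_2 by (simp add: field_simps)
    also have "\<dots> \<le> q * (2 * real n + 1)"
    proof -
      have "real n \<le> real m * real n" using mult_right_mono[of 1 "real m" "real n"] m_pos by simp
      then show ?thesis using m_pos D_ge_2 by (simp add: q_def field_simps)
    qed
    finally show ?thesis .
  qed
  have "expectation (\<lambda>z. X z ^ Suc n) \<le> q * (2 * real n + 1) * expectation (\<lambda>z. X z ^ n)"
    unfolding moment_Suc by (rule mult_right_mono[OF ratio moment_nonneg])
  also have "\<dots> \<le> q * (2 * real n + 1) * (q ^ n * odd_dfact n)"
    using Suc.IH q_pos by (intro mult_left_mono) auto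
  also have "\<dots> = q ^ Suc n * odd_dfact (Suc n)" by (simp add: odd_dfact_Suc)
  finally show ?case .
qed

lemma expectation_mono_unit_interval:
  fixes f g :: "real \<Rightarrow> real"
  assumes "continuous_on UNIV f" "continuous_on UNIV g" "\<And>x. 0 \<le> x \<Longrightarrow> x \<le> 1 \<Longrightarrow> f x \<le> g x"
  shows "expectation (\<lambda>z. f (X z)) \<le> expectation (\<lambda>z. g (X z))"
  by (rule integral_mono_AE)
     (use X_unit_interval assms in \<open>auto elim!: AE_mp intro: integrable_continuous_X\<close>)

lemma central_moment_X_square_le:
  assumes p: "p \<ge> 2"
  shows "expectation (\<lambda>z. (X z ^ 2 - expectation (\<lambda>z. X z ^ 2)) ^ p)
          \<le> fact p / 2 * (28 * q) ^ (p - 2) * (1680 * q ^ 4)"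
proof -
  define \<mu> where "\<mu> = expectation (\<lambda>z. X z ^ 2)"
  have \<mu>0: "\<mu> \<ge> 0" using moment_nonneg by (simp add: \<mu>_def)
  have \<mu>3: "\<mu> \<le> 3 * q^2" using moment_le_odd_dfact[of 2] by (simp add: \<mu>_def odd_dfact_def eval_nat_numeral)
  have pointwise: "(x^2 - \<mu>) ^ p \<le> x ^ (p + 2) + \<mu> ^ p" if "0 \<le> x" "x \<le> 1" for x
  proof -
    have "(x^2)^p \<le> x ^ (p + 2)"
      unfolding power_mult[symmetric] using that p by (intro power_decreasing) auto
    then show ?thesis using power_diff_le_power_add[of "x^2" \<mu> p] \<mu>0 by simp
  qed
  have "expectation (\<lambda>z. (X z ^ 2 - \<mu>) ^ p) \<le> expectation (\<lambda>z. X z ^ (p + 2) + \<mu> ^ p)"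
    by (rule expectation_mono_unit_interval[OF _ _ pointwise]) (auto intro!: continuous_intros)
  also have "\<dots> = expectation (\<lambda>z. X z ^ (p + 2)) + \<mu> ^ p"
    by (subst Bochner_Integration.integral_add)
       (auto intro!: integrable_continuous_X continuous_intros simp: prob_space)
  also have "\<dots> \<le> q ^ (p + 2) * odd_dfact (p + 2) + 3 ^ p * q ^ (p + 2)"
  proof (rule add_mono[OF moment_le_odd_dfact])
    have "\<mu> ^ p \<le> (3 * q^2) ^ p" by (rule power_mono[OF \<mu>3 \<mu>0])
    also have "\<dots> = 3 ^ p * q ^ (2 * p)" by (simp add: power_mult_distrib power_mult)
    also have "\<dots> \<le> 3 ^ p * q ^ (p + 2)"
      using q_pos q_le_1 p by (intro mult_left_mono power_decreasing) auto
    finally show "\<mu> ^ p \<le> 3 ^ p * q ^ (p + 2)" .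
  qed
  also have "\<dots> = q ^ (p + 2) * (odd_dfact (p + 2) + 3 ^ p)" by (simp add: algebra_simps)
  also have "\<dots> \<le> q ^ (p + 2) * (840 * 28 ^ (p - 2) * fact p)"
    using odd_dfact_plus_power3_le[OF p] q_pos by (intro mult_left_mono) auto
  also have "\<dots> = fact p / 2 * (28 * q) ^ (p - 2) * (1680 * q ^ 4)"
  proof -
    have "q ^ (p + 2) = q ^ (p - 2) * q ^ 4" using p by (simp add: power_add[symmetric])
    then show ?thesis by (simp add: power_mult_distrib algebra_simps)
  qed
  finally show ?thesis by (simp add: \<mu>_def)
qed

lemma expectation_X_minus_square:
  "0 \<le> expectation (\<lambda>z. X z - X z ^ 2)" "expectation (\<lambda>z. X z - X z ^ 2) \<le> q"
proof -
  have "expectation (\<lambda>z. 0) \<le> expectation (\<lambda>z. X z - X z ^ 2)"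
    by (rule expectation_mono_unit_interval)
       (auto intro!: continuous_intros simp: power2_eq_square mult_left_le)
  then show "0 \<le> expectation (\<lambda>z. X z - X z ^ 2)" by simp
  have "expectation (\<lambda>z. X z - X z ^ 2) \<le> expectation (\<lambda>z. X z ^ 1)"
    by (rule expectation_mono_unit_interval) (auto intro!: continuous_intros)
  also have "\<dots> \<le> q" using moment_le_odd_dfact[of 1] by (simp add: odd_dfact_def)
  finally show "expectation (\<lambda>z. X z - X z ^ 2) \<le> q" .
qed

lemma moment_X_minus_square_shift_le:
  assumes "0 \<le> c"
  shows "expectation (\<lambda>z. (X z - X z ^ 2 - c) ^ p) \<le> expectation (\<lambda>z. X z ^ p) + c ^ p"
proof -
  have pointwise: "(x - x^2 - c) ^ p \<le> x ^ p + c ^ p" if "0 \<le> x" "x \<le> 1" for x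
  proof -
    have "0 \<le> x - x^2" and "x - x^2 \<le> x"
      using that by (auto simp: power2_eq_square intro: mult_left_le)
    then show ?thesis using power_diff_le_power_add[of "x - x^2" c p] assms power_mono[of "x - x^2" x p]
      by linarith
  qed
  have "expectation (\<lambda>z. (X z - X z ^ 2 - c) ^ p) \<le> expectation (\<lambda>z. X z ^ p + c ^ p)"
    by (rule expectation_mono_unit_interval[OF _ _ pointwise]) (auto intro!: continuous_intros)
  also have "\<dots> = expectation (\<lambda>z. X z ^ p) + c ^ p"
    by (subst Bochner_Integration.integral_add)
       (auto intro!: integrable_continuous_X continuous_intros simp: prob_space)
  finally show ?thesis .
qed

lemma Y2_scalar_moment_le:
  assumes p: "p \<ge> 2"
  defines "c \<equiv> expectation (\<lambda>z. X z - X z ^ 2) / (real D - 1)"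
  shows "(expectation (\<lambda>z. (X z - X z ^ 2 - c) ^ p) - (- c) ^ p) / (real D - 1) + (- c) ^ p
          \<le> fact p / 2 * (12 * q) ^ (p - 2) * (48 * real m ^ 2 / real D ^ 3)"
proof -
  have D1: "real D - 1 \<ge> 1" using D_ge_2 by simp
  have c0: "c \<ge> 0" using expectation_X_minus_square(1) D1 by (simp add: c_def)
  have cp: "c ^ p \<le> q ^ p / (real D - 1)"
  proof -
    have "c ^ p \<le> (q / (real D - 1)) ^ p"
      using expectation_X_minus_square(2) c0 D1 by (intro power_mono) (simp_all add: c_def divide_right_mono)
    also have "\<dots> = q ^ p / (real D - 1) ^ p" by (simp add: power_divide)
    also have "\<dots> \<le> q ^ p / (real D - 1)"
    proof (rule divide_left_mono)
      show "real D - 1 \<le> (real D - 1) ^ p"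
        using power_increasing[of 1 p "real D - 1"] D1 p by simp
    qed (use q_pos D1 in auto)
    finally show ?thesis .
  qed
  have T: "(- c) ^ p * (1 - 1 / (real D - 1)) \<le> c ^ p"
  proof -
    have "(- c) ^ p * (1 - 1 / (real D - 1)) \<le> \<bar>(- c) ^ p\<bar> * (1 - 1 / (real D - 1))"
      by (rule mult_right_mono[OF abs_ge_self]) (use D1 in simp)
    also have "\<dots> \<le> \<bar>(- c) ^ p\<bar> * 1" using D1 by (intro mult_left_mono) auto
    also have "\<dots> = c ^ p" using c0 by (simp add: power_abs)
    finally show ?thesis .
  qed
  have "(expectation (\<lambda>z. (X z - X z ^ 2 - c) ^ p) - (- c) ^ p) / (real D - 1) + (- c) ^ p
      = expectation (\<lambda>z. (X z - X z ^ 2 - c) ^ p) / (real D - 1) + (- c) ^ p * (1 - 1 / (real D - 1))"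
    by (simp add: diff_divide_distrib algebra_simps)
  also have "\<dots> \<le> (expectation (\<lambda>z. X z ^ p) + c ^ p) / (real D - 1) + c ^ p"
    using moment_X_minus_square_shift_le[OF c0] T D1 by (intro add_mono divide_right_mono) auto
  also have "\<dots> \<le> (q ^ p * odd_dfact p + q ^ p) / (real D - 1) + q ^ p / (real D - 1)"
  proof -
    have "q ^ p / (real D - 1) \<le> q ^ p" using D1 q_pos by (simp add: divide_le_eq)
    then show ?thesis
      using moment_le_odd_dfact[of p] cp D1 by (intro add_mono divide_right_mono) auto
  qed
  also have "\<dots> = q ^ p * (odd_dfact p + 2) / (real D - 1)"
    by (simp add: add_divide_distrib[symmetric] algebra_simps)
  also have "\<dots> \<le> q ^ p * (odd_dfact p + 2) * (2 / real D)"
    using D_ge_2 q_pos odd_dfact_pos[of p]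
    by (simp only: divide_inverse, intro mult_left_mono) (auto simp: field_simps)
  also have "\<dots> \<le> q ^ p * (12 * 12 ^ (p - 2) * fact p) * (2 / real D)"
    using odd_dfact_plus_2_le[OF p] q_pos D_ge_2 by (intro mult_right_mono mult_left_mono) auto
  also have "\<dots> = fact p / 2 * (12 * q) ^ (p - 2) * (48 * real m ^ 2 / real D ^ 3)"
  proof -
    have "q ^ p = q ^ (p - 2) * q ^ 2" using p by (metis le_add_diff_inverse2 power_add)
    then show ?thesis
      using D_ge_2 by (simp add: power_mult_distrib q_def field_simps power2_eq_square power3_eq_cube)
  qed
  finally show ?thesis .
qed

lemma moment_X_sqrt_le:
  assumes p: "p \<ge> 2"
  shows "expectation (\<lambda>z. (X z * sqrt (X z - X z ^ 2)) ^ p)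
          \<le> fact p / 2 * (10 * q) ^ (p - 2) * (15 * real m ^ 3 / real D ^ 3)"
proof -
  have pointwise: "(x * sqrt (x - x^2)) ^ p \<le> x ^ (p + 1)" if "0 \<le> x" "x \<le> 1" for x
  proof -
    have s0: "0 \<le> x - x^2" using that by (auto simp: power2_eq_square intro: mult_left_le)
    have "x - x^2 \<le> 1" using that zero_le_power2[of x] by linarith
    then have s1: "sqrt (x - x^2) \<le> 1" by simp
    define g where "g = x * sqrt (x - x^2)"
    have g0: "0 \<le> g" using that s0 by (simp add: g_def)
    have gx: "g \<le> x" using that s1 by (simp add: g_def mult_left_le)
    have "g ^ 2 = x^2 * (x - x^2)" using s0 by (simp add: g_def power_mult_distrib)
    also have "\<dots> \<le> x^2 * x" using that s0 by (intro mult_left_mono) auto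
    finally have g2: "g ^ 2 \<le> x ^ 3" by (simp add: power2_eq_square power3_eq_cube)
    have "g ^ p = g ^ 2 * g ^ (p - 2)" using p by (metis le_add_diff_inverse power_add)
    also have "\<dots> \<le> x ^ 3 * x ^ (p - 2)"
      using g2 g0 gx by (intro mult_mono power_mono) auto
    also have "\<dots> = x ^ (p + 1)" using p by (simp add: power_add[symmetric])
    finally show ?thesis by (simp add: g_def)
  qed
  have "expectation (\<lambda>z. (X z * sqrt (X z - X z ^ 2)) ^ p) \<le> expectation (\<lambda>z. X z ^ (p + 1))"
    by (rule expectation_mono_unit_interval[OF _ _ pointwise]) (auto intro!: continuous_intros)
  also have "\<dots> \<le> q ^ (p + 1) * odd_dfact (p + 1)" by (rule moment_le_odd_dfact)
  also have "\<dots> \<le> q ^ (p + 1) * (15 * 10 ^ (p - 2) * fact p / 2)"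
    using odd_dfact_Suc_le[OF p] q_pos by (intro mult_left_mono) auto
  also have "\<dots> = fact p / 2 * (10 * q) ^ (p - 2) * (15 * real m ^ 3 / real D ^ 3)"
  proof -
    have "q ^ (p + 1) = q ^ (p - 2) * q ^ 3" using p by (simp add: power_add[symmetric])
    then show ?thesis using D_ge_2 by (simp add: power_mult_distrib q_def field_simps power3_eq_cube)
  qed
  finally show ?thesis .
qed

end

section \<open>Outer products and matrix powers\<close>

lemma matrix_add_rdistrib: "((A::real^'n^'m) + B) ** C = A ** C + B ** C"
  by (simp add: matrix_matrix_mult_def vec_eq_iff sum.distrib algebra_simps)

lemma matrix_diff_ldistrib: "(A::real^'n^'m) ** (B - C) = A ** B - A ** C"
  by (simp add: matrix_matrix_mult_def vec_eq_iff sum_subtractf algebra_simps)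

lemma matrix_diff_rdistrib: "((A::real^'n^'m) - B) ** C = A ** C - B ** C"
  by (simp add: matrix_matrix_mult_def vec_eq_iff sum_subtractf algebra_simps)

lemma matrix_mult_scaleR_left: "(c *\<^sub>R (A::real^'n^'m)) ** B = c *\<^sub>R (A ** B)"
  by (simp add: matrix_matrix_mult_def vec_eq_iff sum_distrib_left algebra_simps)

lemma matrix_mult_scaleR_right: "(A::real^'n^'m) ** (c *\<^sub>R B) = c *\<^sub>R (A ** B)"
  by (simp add: matrix_matrix_mult_def vec_eq_iff sum_distrib_left algebra_simps)

lemma scaleR_matrix_vector_mult: "(c *\<^sub>R (A::real^'n^'m)) *v v = c *\<^sub>R (A *v v)"
  by (rule scaleR_matrix_vector_assoc[symmetric])

lemma outer_mult_outer: "outer u v ** outer y z = (v \<bullet> y) *\<^sub>R outer u z"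
  by (simp add: outer_def matrix_matrix_mult_def vec_eq_iff inner_vec_def
      sum_distrib_left sum_distrib_right algebra_simps)

lemma outer_mult_vector: "outer u v *v y = (v \<bullet> y) *\<^sub>R u"
  by (simp add: outer_def matrix_vector_mult_def vec_eq_iff inner_vec_def sum_distrib_left algebra_simps)

lemma quadratic_form_outer: "y \<bullet> (outer u v *v y) = (u \<bullet> y) * (v \<bullet> y)"
  by (simp add: outer_mult_vector inner_commute)

lemma matrix_mult_outer: "A ** outer u v = outer (A *v u) (v::real^'k)"
  by (simp add: outer_def matrix_matrix_mult_def matrix_vector_mult_def vec_eq_iff
      sum_distrib_right sum_distrib_left algebra_simps)

lemma outer_mult_matrix: "outer u v ** (A::real^'n^'m) = outer u (transpose A *v v)"
  by (simp add: outer_def matrix_matrix_mult_def matrix_vector_mult_def transpose_def vec_eq_iff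
      sum_distrib_left algebra_simps)

lemma matpow_scaleR: "matpow (c *\<^sub>R A) n = c ^ n *\<^sub>R matpow A n"
  by (induction n) (simp_all add: matrix_mult_scaleR_left matrix_mult_scaleR_right)

lemma matpow_outer_self:
  "n \<ge> 1 \<Longrightarrow> matpow (outer x x) n = (norm x ^ 2) ^ (n - 1) *\<^sub>R outer x x"
proof (induction n rule: nat_induct_at_least)
  case (Suc n)
  then obtain k where "n = Suc k" by (cases n) auto
  with Suc.IH show ?case
    by (simp add: matrix_mult_scaleR_right outer_mult_outer power2_norm_eq_inner power_Suc2)
qed simp

text \<open>P = b b^T and Q = W W^T in the Y_2 case: P is a projection below the projection Q.\<close>

lemma matpow_scaled_projections_diff:
  fixes P Q :: "real^'n^'n"
  assumes PP: "P ** P = P" and PQ: "P ** Q = P" and QP: "Q ** P = P" and QQ: "Q ** Q = Q"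
    and n: "n \<ge> 1"
  shows "matpow (s *\<^sub>R P - c *\<^sub>R Q) n = ((s - c)^n - (-c)^n) *\<^sub>R P + (-c)^n *\<^sub>R Q"
  using n
proof (induction n rule: nat_induct_at_least)
  case base then show ?case by (simp add: algebra_simps)
next
  case (Suc n)
  define a where "a = (s - c)^n - (-c)^n"
  define b where "b = (-c)^n"
  have "matpow (s *\<^sub>R P - c *\<^sub>R Q) (Suc n) = (s *\<^sub>R P - c *\<^sub>R Q) ** (a *\<^sub>R P + b *\<^sub>R Q)"
    by (simp add: Suc.IH a_def b_def)
  also have "\<dots> = (s * a + s * b - c * a) *\<^sub>R P + (- (c * b)) *\<^sub>R Q"
    by (simp add: matrix_add_ldistrib matrix_add_rdistrib matrix_diff_ldistrib matrix_diff_rdistrib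
        matrix_mult_scaleR_left matrix_mult_scaleR_right PP PQ QP QQ algebra_simps)
  also have "s * a + s * b - c * a = (s - c)^Suc n - (-c)^Suc n"
    by (simp add: a_def b_def algebra_simps)
  also have "- (c * b) = (-c) ^ Suc n" by (simp add: b_def)
  finally show ?case .
qed

text \<open>N = x b^T + b x^T in the Y_3 case, with N^2 = E and N E = \<rho> N.\<close>

lemma matpow_odd_of_cube:
  fixes N E :: "real^'n^'n"
  assumes NN: "N ** N = E" and NE: "N ** E = \<rho> *\<^sub>R N"
  shows "matpow N (2 * j + 1) = \<rho> ^ j *\<^sub>R N"
proof (induction j)
  case (Suc j)
  have "2 * Suc j + 1 = Suc (Suc (2 * j + 1))" by simp
  then have "matpow N (2 * Suc j + 1) = N ** (N ** matpow N (2 * j + 1))"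
    by (simp only: matpow.simps)
  also have "\<dots> = \<rho> ^ j *\<^sub>R (N ** (N ** N))" by (simp only: Suc.IH matrix_mult_scaleR_right)
  also have "\<dots> = \<rho> ^ Suc j *\<^sub>R N"
    by (simp only: NN NE scaleR_scaleR power_Suc mult.commute)
  finally show ?case .
qed simp

lemma matpow_even_of_cube:
  fixes N E :: "real^'n^'n"
  assumes NN: "N ** N = E" and NE: "N ** E = \<rho> *\<^sub>R N" and j: "j \<ge> 1"
  shows "matpow N (2 * j) = \<rho> ^ (j - 1) *\<^sub>R E"
proof -
  obtain i where i: "j = Suc i" using j by (cases j) auto
  have "matpow N (2 * j) = N ** matpow N (2 * i + 1)" by (simp add: i)
  also have "\<dots> = \<rho> ^ i *\<^sub>R E" by (simp only: matpow_odd_of_cube[OF NN NE] matrix_mult_scaleR_right NN)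
  finally show ?thesis by (simp add: i)
qed

lemma inner_matrix_vector_transpose: "(W *v a) \<bullet> y = a \<bullet> (transpose W *v (y::real^'m))"
  by (simp add: matrix_vector_mult_def transpose_def inner_vec_def sum_distrib_left sum_distrib_right
      algebra_simps) (rule sum.swap)

lemma inner_isometry:
  assumes "transpose W ** W = mat 1"
  shows "(W *v a) \<bullet> (W *v c) = a \<bullet> (c::real^'n)"
  by (simp only: inner_matrix_vector_transpose matrix_vector_mul_assoc assms matrix_vector_mul_lid)

lemma norm_transpose_isometry_le:
  assumes "transpose W ** W = mat 1"
  shows "norm (transpose W *v v) \<le> norm (v::real^'m)"
proof -
  define u where "u = transpose W *v v"
  have "norm u ^ 2 = (W *v u) \<bullet> v" by (simp add: power2_norm_eq_inner inner_matrix_vector_transpose u_def)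
  also have "\<dots> \<le> norm (W *v u) * norm v" by (rule norm_cauchy_schwarz)
  also have "norm (W *v u) = norm u" using inner_isometry[OF assms, of u u] by (simp add: norm_eq_sqrt_inner)
  finally have "norm u * norm u \<le> norm u * norm v" by (simp add: power2_eq_square)
  then show ?thesis unfolding u_def[symmetric]
    by (cases "norm u = 0") (auto simp: mult_le_cancel_left)
qed

lemma inner_matrix_vector_eq_0_if_span_columns:
  fixes W :: "real^'e^'d"
  assumes "span (columns W) = {v. v \<bullet> x = 0}"
  shows "x \<bullet> (W *v a) = 0"
proof -
  have "column j W \<in> span (columns W)" for j by (rule span_base) (auto simp: columns_def)
  then have col: "column j W \<bullet> x = 0" for j using assms by simp
  have "x \<bullet> (W *v a) = (\<Sum>j\<in>UNIV. a $ j * (column j W \<bullet> x))"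
    by (simp add: matrix_vector_mult_def column_def inner_vec_def sum_distrib_left sum_distrib_right
        algebra_simps) (rule sum.swap)
  then show ?thesis by (simp add: col)
qed

lemma loewner_leI: "(\<And>v. v \<bullet> (A *v v) \<le> v \<bullet> (B *v v)) \<Longrightarrow> loewner_le A B"
  unfolding loewner_le_def by (simp add: matrix_vector_mult_diff_rdistrib inner_diff_right)

lemma quadratic_form_matpow_Y2:
  fixes W :: "real^'e^'d" and x v :: "real^'d"
  assumes WW: "transpose W ** W = mat 1" and a: "norm a = 1" and p: "p \<ge> 1"
  defines "u \<equiv> transpose W *v v"
  shows "v \<bullet> (matpow (Ymat 2 s a W x - (norm x ^ 2 * c) *\<^sub>R (W ** transpose W)) p *v v)
       = (norm x ^ 2) ^ p * (((s - s^2 - c)^p - (-c)^p) * ((a \<bullet> u) * (a \<bullet> u)) + (-c)^p * (u \<bullet> u))"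
proof -
  define P where "P = outer (W *v a) (W *v a)"
  define Q where "Q = W ** transpose W"
  have Qb: "Q *v (W *v a) = W *v a"
    by (simp only: Q_def matrix_vector_mul_assoc matrix_mul_assoc[symmetric] WW matrix_mul_rid)
  have "(W *v a) \<bullet> (W *v a) = 1" using a inner_isometry[OF WW] by (simp add: norm_eq_sqrt_inner)
  then have PP: "P ** P = P" by (simp add: P_def outer_mult_outer)
  have QP: "Q ** P = P" by (simp add: P_def matrix_mult_outer Qb)
  have PQ: "P ** Q = P"
    by (simp add: P_def outer_mult_matrix Q_def matrix_transpose_mul Qb[unfolded Q_def])
  have QQ: "Q ** Q = Q"
    by (simp add: Q_def matrix_mul_assoc) (simp add: matrix_mul_assoc[symmetric] WW)
  have "Ymat 2 s a W x - (norm x ^ 2 * c) *\<^sub>R Q = norm x ^ 2 *\<^sub>R ((s - s^2) *\<^sub>R P - c *\<^sub>R Q)"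
    by (simp add: Ymat_def P_def matrix_mult_outer outer_mult_matrix algebra_simps)
  then have "matpow (Ymat 2 s a W x - (norm x ^ 2 * c) *\<^sub>R Q) p
      = (norm x ^ 2) ^ p *\<^sub>R (((s - s^2 - c)^p - (-c)^p) *\<^sub>R P + (-c)^p *\<^sub>R Q)"
    using p by (simp add: matpow_scaleR matpow_scaled_projections_diff[OF PP PQ QP QQ])
  moreover have "v \<bullet> (P *v v) = (a \<bullet> u) * (a \<bullet> u)"
    by (simp add: P_def quadratic_form_outer inner_matrix_vector_transpose u_def)
  moreover have "v \<bullet> (Q *v v) = u \<bullet> u"
  proof -
    have "v \<bullet> (Q *v v) = (W *v u) \<bullet> v" by (simp only: Q_def u_def matrix_vector_mul_assoc inner_commute)
    then show ?thesis by (simp only: inner_matrix_vector_transpose u_def)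
  qed
  ultimately show ?thesis
    by (simp add: Q_def scaleR_matrix_vector_mult matrix_vector_mult_add_rdistrib inner_add_right)
qed

lemma quadratic_form_matpow_Y3:
  fixes W :: "real^'e^'d" and x v :: "real^'d"
  assumes WW: "transpose W ** W = mat 1" and a: "norm a = 1" and perp: "x \<bullet> (W *v a) = 0"
    and p: "p \<ge> 1"
  defines "u \<equiv> transpose W *v v" and "\<rho> \<equiv> norm x ^ 2"
  shows "v \<bullet> (matpow (Ymat 3 s a W x) p *v v) = (s * sqrt (s - s^2) * norm x) ^ p *
     (if even p then \<rho> ^ (p div 2 - 1) * ((x \<bullet> v) * (x \<bullet> v) + \<rho> * ((a \<bullet> u) * (a \<bullet> u)))
      else \<rho> ^ (p div 2) * (2 * (x \<bullet> v)) * (a \<bullet> u))"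
proof -
  define b where "b = W *v a"
  define N where "N = outer x b + outer b x"
  define E where "E = outer x x + \<rho> *\<^sub>R outer b b"
  have bb: "b \<bullet> b = 1" using a inner_isometry[OF WW] by (simp add: b_def norm_eq_sqrt_inner)
  have xb: "x \<bullet> b = 0" "b \<bullet> x = 0" using perp by (simp_all add: b_def inner_commute)
  have xx: "x \<bullet> x = \<rho>" by (simp add: \<rho>_def power2_norm_eq_inner)
  have NN: "N ** N = E"
    by (simp add: N_def E_def matrix_add_ldistrib matrix_add_rdistrib outer_mult_outer bb xb xx)
  have NE: "N ** E = \<rho> *\<^sub>R N"
    by (simp add: N_def E_def matrix_add_ldistrib matrix_add_rdistrib matrix_mult_scaleR_right
        outer_mult_outer bb xb xx algebra_simps)
  have Y: "matpow (Ymat 3 s a W x) p = (s * sqrt (s - s^2) * norm x) ^ p *\<^sub>R matpow N p"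
    by (simp add: Ymat_def matpow_scaleR N_def b_def matrix_mult_outer outer_mult_matrix)
  have bv: "b \<bullet> v = a \<bullet> u" by (simp add: b_def inner_matrix_vector_transpose u_def)
  have "v \<bullet> (matpow N p *v v) =
     (if even p then \<rho> ^ (p div 2 - 1) * ((x \<bullet> v) * (x \<bullet> v) + \<rho> * ((a \<bullet> u) * (a \<bullet> u)))
      else \<rho> ^ (p div 2) * (2 * (x \<bullet> v)) * (a \<bullet> u))"
  proof (cases "even p")
    case True
    then obtain j where j: "p = 2 * j" by blast
    with p have "j \<ge> 1" by simp
    then show ?thesis
      by (simp add: j matpow_even_of_cube[OF NN NE] E_def scaleR_matrix_vector_mult
          matrix_vector_mult_add_rdistrib inner_add_right quadratic_form_outer bv)
  next
    case False
    then obtain j where j: "p = 2 * j + 1" using oddE by blast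
    show ?thesis
      unfolding j matpow_odd_of_cube[OF NN NE]
      by (simp add: N_def scaleR_matrix_vector_mult
          matrix_vector_mult_add_rdistrib inner_add_right quadratic_form_outer inner_commute bv)
  qed
  then show ?thesis by (simp add: Y scaleR_matrix_vector_mult)
qed

lemma continuous_on_matrix_mult[continuous_intros]:
  fixes f :: "'x::topological_space \<Rightarrow> real^'n^'m" and g :: "'x \<Rightarrow> real^'k^'n"
  shows "continuous_on S f \<Longrightarrow> continuous_on S g \<Longrightarrow> continuous_on S (\<lambda>z. f z ** g z)"
  unfolding matrix_matrix_mult_def by (intro continuous_intros)

lemma continuous_on_matrix_vector_mult[continuous_intros]:
  fixes f :: "'x::topological_space \<Rightarrow> real^'n^'m"
  shows "continuous_on S f \<Longrightarrow> continuous_on S (\<lambda>z. f z *v v)"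
  unfolding matrix_vector_mult_def by (intro continuous_intros)

lemma continuous_on_matpow[continuous_intros]:
  fixes f :: "'x::topological_space \<Rightarrow> real^'n^'n"
  shows "continuous_on S f \<Longrightarrow> continuous_on S (\<lambda>z. matpow (f z) n)"
  by (induction n) (auto intro!: continuous_intros)

lemma continuous_on_outer[continuous_intros]:
  fixes f :: "'x::topological_space \<Rightarrow> real^'n" and g :: "'x \<Rightarrow> real^'m"
  shows "continuous_on S f \<Longrightarrow> continuous_on S g \<Longrightarrow> continuous_on S (\<lambda>z. outer (f z) (g z))"
  unfolding outer_def by (intro continuous_intros)

lemma continuous_on_transpose[continuous_intros]:
  fixes f :: "'x::topological_space \<Rightarrow> real^'n^'m"
  shows "continuous_on S f \<Longrightarrow> continuous_on S (\<lambda>z. transpose (f z))"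
  unfolding transpose_def by (intro continuous_intros)

lemma continuous_on_Ymat[continuous_intros]:
  "continuous_on S f \<Longrightarrow> continuous_on S g \<Longrightarrow> continuous_on S (\<lambda>z. Ymat k (f z) (g z) W x)"
  unfolding Ymat_def by (cases "k = 1"; cases "k = 2") (simp_all; intro continuous_intros)+

lemma mult_power_le_mult_power:
  fixes E C r R :: real
  assumes "E \<le> C" "0 \<le> C" "0 \<le> r" "r \<le> R"
  shows "E * r ^ n \<le> C * R ^ n"
proof -
  have "E * r ^ n \<le> C * r ^ n" using assms by (intro mult_right_mono) auto
  also have "\<dots> \<le> C * R ^ n" using assms by (intro mult_left_mono power_mono) auto
  finally show ?thesis .
qed

section \<open>Expectations over an independent weight and direction\<close>

context prob_space
begin

lemma expectation_matrix_entry: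
  fixes F :: "'a \<Rightarrow> real^'n^'m"
  assumes "integrable M F"
  shows "expectation F $ i $ j = expectation (\<lambda>z. F z $ i $ j)"
proof -
  have "expectation F $ i = expectation (\<lambda>z. F z $ i)"
    by (rule integral_bounded_linear[OF bounded_linear_vec_nth assms, symmetric])
  also have "\<dots> $ j = expectation (\<lambda>z. F z $ i $ j)"
    by (rule integral_bounded_linear[OF bounded_linear_vec_nth, symmetric])
       (rule integrable_bounded_linear[OF bounded_linear_vec_nth assms])
  finally show ?thesis .
qed

lemma expectation_quadratic_form:
  fixes F :: "'a \<Rightarrow> real^'n^'n"
  assumes "integrable M F"
  shows "v \<bullet> (expectation F *v v) = expectation (\<lambda>z. v \<bullet> (F z *v v))"
proof -
  have "linear (\<lambda>A::real^'n^'n. v \<bullet> (A *v v))"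
    by (rule linearI) (simp_all add: matrix_vector_mult_add_rdistrib scaleR_matrix_vector_mult inner_add_right)
  then have "bounded_linear (\<lambda>A::real^'n^'n. v \<bullet> (A *v v))"
    using linear_conv_bounded_linear by blast
  then show ?thesis by (rule integral_bounded_linear[OF _ assms, symmetric])
qed

end

locale weight_direction = prob_space +
  fixes w :: "'a \<Rightarrow> real" and \<alpha> :: "'a \<Rightarrow> real^'e::finite"
  assumes w_measurable[measurable]: "w \<in> borel_measurable M"
    and \<alpha>_measurable[measurable]: "\<alpha> \<in> borel_measurable M"
    and w_unit_interval: "AE z in M. 0 \<le> w z \<and> w z \<le> 1"
    and distr_\<alpha>: "distr M borel \<alpha> = uniform_sphere"
    and indep: "\<forall>A\<in>sets (borel :: real measure). \<forall>B\<in>sets (borel :: (real^'e) measure).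
         measure M (w -` A \<inter> \<alpha> -` B \<inter> space M)
         = measure M (w -` A \<inter> space M) * measure M (\<alpha> -` B \<inter> space M)"
begin

lemma AE_norm_\<alpha>: "AE z in M. norm (\<alpha> z) = 1"
proof -
  have "AE a in distr M borel \<alpha>. norm a = 1" unfolding distr_\<alpha> by (rule AE_uniform_sphere_norm)
  then show ?thesis by (subst (asm) AE_distr_iff) auto
qed

lemma integrable_continuous_pair:
  fixes G :: "real \<Rightarrow> real^'e \<Rightarrow> 'b::{banach, second_countable_topology}"
  assumes G: "continuous_on UNIV (\<lambda>p. G (fst p) (snd p))"
  shows "integrable M (\<lambda>z. G (w z) (\<alpha> z))"
proof -
  have "compact ({0..1::real} \<times> cball (0::real^'e) 1)"
    by (intro compact_Times compact_Icc compact_cball)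
  then obtain B where B: "\<forall>p\<in>{0..1::real} \<times> cball (0::real^'e) 1. norm (G (fst p) (snd p)) \<le> B"
    using continuous_on_bounded_on_compact[OF G] by blast
  show ?thesis
  proof (rule integrable_const_bound[where B=B])
    show "AE z in M. norm (G (w z) (\<alpha> z)) \<le> B"
      using w_unit_interval AE_norm_\<alpha> by eventually_elim (use B in \<open>auto simp: mem_Times_iff\<close>)
    show "(\<lambda>z. G (w z) (\<alpha> z)) \<in> borel_measurable M"
      by (rule borel_measurable_continuous_Pair[OF w_measurable \<alpha>_measurable G])
  qed
qed

lemma integrable_continuous_w:
  fixes f :: "real \<Rightarrow> real"
  assumes "continuous_on UNIV f"
  shows "integrable M (\<lambda>z. f (w z))"
proof -
  have "continuous_on UNIV (\<lambda>p::real \<times> (real^'e). f (fst p))"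
    by (rule continuous_on_compose2[OF assms]) (auto intro: continuous_intros)
  then show ?thesis using integrable_continuous_pair[of "\<lambda>s a. f s"] by simp
qed

lemma expectation_cong_unit_direction:
  fixes F G :: "real \<Rightarrow> real^'e \<Rightarrow> real"
  assumes "continuous_on UNIV (\<lambda>p. F (fst p) (snd p))"
    and "(\<lambda>z. G (w z) (\<alpha> z)) \<in> borel_measurable M"
    and "\<And>s a. norm a = 1 \<Longrightarrow> F s a = G s a"
  shows "expectation (\<lambda>z. F (w z) (\<alpha> z)) = expectation (\<lambda>z. G (w z) (\<alpha> z))"
  by (rule integral_cong_AE)
     (use integrable_continuous_pair[OF assms(1)] assms(2,3) AE_norm_\<alpha> in \<open>auto elim!: AE_mp\<close>)

lemma expectation_mult_indep:
  fixes f :: "real \<Rightarrow> real" and h :: "real^'e \<Rightarrow> real"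
  assumes f: "continuous_on UNIV f" and h: "continuous_on UNIV h"
  shows "expectation (\<lambda>z. f (w z) * h (\<alpha> z)) = expectation (\<lambda>z. f (w z)) * integral\<^sup>L uniform_sphere h"
proof -
  have "expectation (\<lambda>z. f (w z) * h (\<alpha> z)) = expectation (\<lambda>z. f (w z)) * expectation (\<lambda>z. h (\<alpha> z))"
  proof (rule indep_var_lebesgue_integral)
    show "indep_var borel (\<lambda>z. f (w z)) borel (\<lambda>z. h (\<alpha> z))"
      by (rule indep_var_compose_of_measure_product[OF w_measurable \<alpha>_measurable
            borel_measurable_continuous_onI[OF f] borel_measurable_continuous_onI[OF h] indep])
    show "integrable M (\<lambda>z. f (w z))" by (rule integrable_continuous_w[OF f])
    have "continuous_on UNIV (\<lambda>p::real \<times> (real^'e). h (snd p))"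
      by (rule continuous_on_compose2[OF h]) (auto intro: continuous_intros)
    then show "integrable M (\<lambda>z. h (\<alpha> z))" using integrable_continuous_pair[of "\<lambda>s a. h a"] by simp
  qed
  also have "expectation (\<lambda>z. h (\<alpha> z)) = integral\<^sup>L uniform_sphere h"
    using integral_distr[OF \<alpha>_measurable borel_measurable_continuous_onI[OF h]] by (simp add: distr_\<alpha>)
  finally show ?thesis .
qed

lemma expectation_mult_inner:
  fixes f :: "real \<Rightarrow> real"
  assumes "continuous_on UNIV f"
  shows "expectation (\<lambda>z. f (w z) * (\<alpha> z \<bullet> u)) = 0"
  using expectation_mult_indep[OF assms, of "\<lambda>a. a \<bullet> u"]
  by (simp add: uniform_sphere_inner_mean continuous_intros)

lemma expectation_mult_inner_inner:
  fixes f :: "real \<Rightarrow> real"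
  assumes "continuous_on UNIV f"
  shows "expectation (\<lambda>z. f (w z) * ((\<alpha> z \<bullet> u) * (\<alpha> z \<bullet> u')))
       = expectation (\<lambda>z. f (w z)) * ((u \<bullet> u') / CARD('e))"
  using expectation_mult_indep[OF assms, of "\<lambda>a. (a \<bullet> u) * (a \<bullet> u')"]
  by (simp add: uniform_sphere_inner_inner continuous_intros)

lemma expectation_Y2:
  fixes W :: "real^'e^'d" and x :: "real^'d"
  shows "expectation (\<lambda>z. Ymat 2 (w z) (\<alpha> z) W x)
       = (norm x ^ 2 * (expectation (\<lambda>z. w z - w z ^ 2) / CARD('e))) *\<^sub>R (W ** transpose W)"
proof -
  have integrable: "integrable M (\<lambda>z. Ymat 2 (w z) (\<alpha> z) W x)"
    by (rule integrable_continuous_pair[of "\<lambda>s a. Ymat 2 s a W x"]) (intro continuous_intros)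
  have "expectation (\<lambda>z. Ymat 2 (w z) (\<alpha> z) W x) $ i $ j
      = ((norm x ^ 2 * (expectation (\<lambda>z. w z - w z ^ 2) / CARD('e))) *\<^sub>R (W ** transpose W)) $ i $ j"
    for i j
  proof -
    have "Ymat 2 s a W x = ((s - s^2) * norm x ^ 2) *\<^sub>R outer (W *v a) (W *v a)" for s a
      by (simp add: Ymat_def matrix_mult_outer outer_mult_matrix)
    then have "expectation (\<lambda>z. Ymat 2 (w z) (\<alpha> z) W x) $ i $ j
        = expectation (\<lambda>z. ((w z - w z ^ 2) * norm x ^ 2) * ((\<alpha> z \<bullet> W $ i) * (\<alpha> z \<bullet> W $ j)))"
      by (subst expectation_matrix_entry[OF integrable])
         (simp add: outer_def matrix_vector_mul_component inner_commute)
    also have "\<dots> = expectation (\<lambda>z. (w z - w z ^ 2) * norm x ^ 2) * ((W $ i \<bullet> W $ j) / CARD('e))"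
      by (rule expectation_mult_inner_inner) (intro continuous_intros)
    finally show ?thesis
      by (simp add: matrix_matrix_mult_def transpose_def inner_vec_def)
  qed
  then show ?thesis by (simp add: vec_eq_iff)
qed

lemma expectation_Y3:
  fixes W :: "real^'e^'d" and x :: "real^'d"
  shows "expectation (\<lambda>z. Ymat 3 (w z) (\<alpha> z) W x) = 0"
proof -
  define g where "g s = s * sqrt (s - s^2) * norm x" for s
  have integrable: "integrable M (\<lambda>z. Ymat 3 (w z) (\<alpha> z) W x)"
    by (rule integrable_continuous_pair[of "\<lambda>s a. Ymat 3 s a W x"]) (intro continuous_intros)
  have mean_zero: "expectation (\<lambda>z. (g (w z) * x $ i) * (\<alpha> z \<bullet> W $ j)) = 0" for i j
    by (rule expectation_mult_inner) (simp add: g_def continuous_intros)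
  have integrable_term: "integrable M (\<lambda>z. (g (w z) * x $ i) * (\<alpha> z \<bullet> W $ j))" for i j
    using integrable_continuous_pair[of "\<lambda>s a. (g s * x $ i) * (a \<bullet> W $ j)"]
    by (simp add: g_def continuous_intros)
  have "expectation (\<lambda>z. Ymat 3 (w z) (\<alpha> z) W x) $ i $ j = 0" for i j
  proof -
    have "Ymat 3 s a W x = g s *\<^sub>R (outer x (W *v a) + outer (W *v a) x)" for s a
      by (simp add: Ymat_def g_def matrix_mult_outer outer_mult_matrix)
    then have "expectation (\<lambda>z. Ymat 3 (w z) (\<alpha> z) W x) $ i $ j
        = expectation (\<lambda>z. (g (w z) * x $ i) * (\<alpha> z \<bullet> W $ j) + (g (w z) * x $ j) * (\<alpha> z \<bullet> W $ i))"
      by (subst expectation_matrix_entry[OF integrable])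
         (simp add: outer_def matrix_vector_mul_component inner_commute algebra_simps)
    then show ?thesis by (simp add: integrable_term mean_zero)
  qed
  then show ?thesis by (simp add: vec_eq_iff)
qed

lemma Y1_central_moment_loewner:
  fixes W :: "real^'e^'d" and x :: "real^'d" and md Dd Xn :: real
  defines "q \<equiv> md / Dd"
  assumes p: "p \<ge> 2" and Xn: "norm x \<le> Xn" and q_pos: "q > 0"
    and scalar: "expectation (\<lambda>z. (w z ^ 2 - expectation (\<lambda>z. w z ^ 2)) ^ p)
          \<le> fact p / 2 * (28 * q) ^ (p - 2) * (1680 * q ^ 4)"
  shows "loewner_le
     (expectation (\<lambda>z. matpow (Ymat 1 (w z) (\<alpha> z) W x - expectation (\<lambda>z'. Ymat 1 (w z') (\<alpha> z') W x)) p))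
     ((fact p / 2 * Rk 1 md Dd Xn ^ (p - 2)) *\<^sub>R Asq 1 md Dd x)"
proof -
  define \<mu> where "\<mu> = expectation (\<lambda>z. w z ^ 2)"
  define E where "E = expectation (\<lambda>z. (w z ^ 2 - \<mu>) ^ p)"
  define r where "r = norm x"
  define C where "C = fact p / 2 * (28 * q) ^ (p - 2) * (1680 * q ^ 4)"
  have Y: "Ymat 1 (w z) (\<alpha> z) W x = (w z ^ 2) *\<^sub>R outer x x" for z by (simp add: Ymat_def)
  have EY: "expectation (\<lambda>z. Ymat 1 (w z) (\<alpha> z) W x) = \<mu> *\<^sub>R outer x x"
    unfolding Y \<mu>_def by (rule integral_scaleR_left) (rule integrable_continuous_w, intro continuous_intros)
  have "expectation (\<lambda>z. matpow (Ymat 1 (w z) (\<alpha> z) W x - \<mu> *\<^sub>R outer x x) p)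
      = expectation (\<lambda>z. ((w z ^ 2 - \<mu>) ^ p * (r^2) ^ (p - 1)) *\<^sub>R outer x x)"
    unfolding Y using p by (simp add: scaleR_diff_left[symmetric] matpow_scaleR matpow_outer_self r_def)
  also have "\<dots> = (E * (r^2) ^ (p - 1)) *\<^sub>R outer x x"
    unfolding E_def by (subst integral_scaleR_left) (auto intro!: integrable_continuous_w continuous_intros)
  finally have EPhi: "expectation (\<lambda>z. matpow (Ymat 1 (w z) (\<alpha> z) W x - \<mu> *\<^sub>R outer x x) p)
      = (E * (r^2) ^ (p - 1)) *\<^sub>R outer x x" .
  have RHS: "(fact p / 2 * Rk 1 md Dd Xn ^ (p - 2)) *\<^sub>R Asq 1 md Dd x
       = (C * (Xn^2) ^ (p - 2) * r^2) *\<^sub>R outer x x"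
    by (simp add: Rk_def Asq_def S1_def C_def r_def q_def power_divide power_mult_distrib)
  have "(r^2) ^ (p - 1) = (r^2) ^ (p - 2) * r^2"
    using p by (simp add: power_Suc2[symmetric] Suc_diff_le[symmetric] numeral_2_eq_2)
  then have "E * (r^2) ^ (p - 1) = E * (r^2) ^ (p - 2) * r^2" by simp
  also have "\<dots> \<le> C * (Xn^2) ^ (p - 2) * r^2"
  proof (rule mult_right_mono[OF mult_power_le_mult_power])
    show "E \<le> C" using scalar unfolding E_def \<mu>_def C_def .
    show "r^2 \<le> Xn^2" using Xn by (intro power_mono) (auto simp: r_def)
  qed (use q_pos in \<open>auto simp: C_def\<close>)
  finally have "E * (r^2) ^ (p - 1) \<le> C * (Xn^2) ^ (p - 2) * r^2" .
  then show ?thesis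
    unfolding EY EPhi RHS
    by (intro loewner_leI) (simp add: scaleR_matrix_vector_mult quadratic_form_outer mult_right_mono)
qed

lemma quadratic_form_central_moment_Y2:
  fixes W :: "real^'e^'d" and x v :: "real^'d"
  assumes WW: "transpose W ** W = mat 1" and p: "p \<ge> 1"
  defines "u \<equiv> transpose W *v v"
  shows "v \<bullet> (expectation (\<lambda>z. matpow (Ymat 2 (w z) (\<alpha> z) W x - (norm x ^ 2 * c) *\<^sub>R (W ** transpose W)) p) *v v)
       = (norm x ^ 2) ^ p * (u \<bullet> u) *
         ((expectation (\<lambda>z. (w z - w z ^ 2 - c) ^ p) - (-c) ^ p) / CARD('e) + (-c) ^ p)"
proof -
  define F where "F s = (s - s^2 - c)^p - (-c)^p" for s
  have F: "continuous_on UNIV F" unfolding F_def by (intro continuous_intros)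
  have integrable: "integrable M (\<lambda>z. matpow (Ymat 2 (w z) (\<alpha> z) W x - (norm x ^ 2 * c) *\<^sub>R (W ** transpose W)) p)"
    by (rule integrable_continuous_pair[of "\<lambda>s a. matpow (Ymat 2 s a W x - _) p"]) (intro continuous_intros)
  have integrable_F: "integrable M (\<lambda>z. F (w z) * ((\<alpha> z \<bullet> u) * (\<alpha> z \<bullet> u)))"
    using integrable_continuous_pair[of "\<lambda>s a. F s * ((a \<bullet> u) * (a \<bullet> u))"]
    by (simp add: F_def continuous_intros)
  have "v \<bullet> (expectation (\<lambda>z. matpow (Ymat 2 (w z) (\<alpha> z) W x - (norm x ^ 2 * c) *\<^sub>R (W ** transpose W)) p) *v v)
      = expectation (\<lambda>z. v \<bullet> (matpow (Ymat 2 (w z) (\<alpha> z) W x - (norm x ^ 2 * c) *\<^sub>R (W ** transpose W)) p *v v))"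
    by (rule expectation_quadratic_form[OF integrable])
  also have "\<dots> = expectation (\<lambda>z. (norm x ^ 2) ^ p * (F (w z) * ((\<alpha> z \<bullet> u) * (\<alpha> z \<bullet> u)) + (-c)^p * (u \<bullet> u)))"
    using p by (intro expectation_cong_unit_direction)
      (auto simp: u_def F_def quadratic_form_matpow_Y2[OF WW] intro!: continuous_intros)
  also have "\<dots> = (norm x ^ 2) ^ p * (expectation (\<lambda>z. F (w z) * ((\<alpha> z \<bullet> u) * (\<alpha> z \<bullet> u))) + (-c)^p * (u \<bullet> u))"
    using integrable_F by (simp add: prob_space)
  also have "expectation (\<lambda>z. F (w z) * ((\<alpha> z \<bullet> u) * (\<alpha> z \<bullet> u))) = expectation (\<lambda>z. F (w z)) * ((u \<bullet> u) / CARD('e))"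
    by (rule expectation_mult_inner_inner[OF F])
  also have "expectation (\<lambda>z. F (w z)) = expectation (\<lambda>z. (w z - w z ^ 2 - c)^p) - (-c)^p"
    unfolding F_def
    by (subst Bochner_Integration.integral_diff) (auto intro!: integrable_continuous_w continuous_intros simp: prob_space)
  finally show ?thesis by (simp add: field_simps)
qed

lemma Y2_central_moment_loewner:
  fixes W :: "real^'e^'d" and x :: "real^'d" and md Dd Xn :: real
  defines "q \<equiv> md / Dd" and "c \<equiv> expectation (\<lambda>z. w z - w z ^ 2) / (Dd - 1)"
  assumes p: "p \<ge> 2" and Xn: "norm x \<le> Xn" and q_pos: "q > 0"
    and card: "real CARD('e) = Dd - 1" and WW: "transpose W ** W = mat 1"
    and scalar: "(expectation (\<lambda>z. (w z - w z ^ 2 - c) ^ p) - (- c) ^ p) / (Dd - 1) + (- c) ^ p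
          \<le> fact p / 2 * (12 * q) ^ (p - 2) * (48 * md ^ 2 / Dd ^ 3)"
  shows "loewner_le
     (expectation (\<lambda>z. matpow (Ymat 2 (w z) (\<alpha> z) W x - expectation (\<lambda>z'. Ymat 2 (w z') (\<alpha> z') W x)) p))
     ((fact p / 2 * Rk 2 md Dd Xn ^ (p - 2)) *\<^sub>R Asq 2 md Dd x)"
proof -
  define r where "r = norm x"
  define \<kappa> where "\<kappa> = (expectation (\<lambda>z. (w z - w z ^ 2 - c) ^ p) - (- c) ^ p) / (Dd - 1) + (- c) ^ p"
  define K where "K = fact p / 2 * (12 * q) ^ (p - 2) * (48 * md ^ 2 / Dd ^ 3)"
  have D1: "Dd - 1 > 0" using card by (metis of_nat_0_less_iff zero_less_card_finite)
  have K0: "0 \<le> K" using q_pos D1 by (simp add: K_def q_def zero_less_divide_iff)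
  have r_power: "(r^2)^p = (r^2)^2 * (r^2)^(p-2)" using p by (metis le_add_diff_inverse power_add)
  have EY: "expectation (\<lambda>z. Ymat 2 (w z) (\<alpha> z) W x) = (r^2 * c) *\<^sub>R (W ** transpose W)"
    by (simp add: expectation_Y2 c_def card r_def)
  show ?thesis
    unfolding EY
  proof (rule loewner_leI)
    fix v :: "real^'d"
    define u where "u = transpose W *v v"
    have "v \<bullet> (expectation (\<lambda>z. matpow (Ymat 2 (w z) (\<alpha> z) W x - (r^2 * c) *\<^sub>R (W ** transpose W)) p) *v v)
        = (r^2)^2 * (u \<bullet> u) * (\<kappa> * (r^2)^(p-2))"
      using quadratic_form_central_moment_Y2[where c=c and v=v and x=x and p=p, OF WW] p
      by (simp add: r_def u_def \<kappa>_def card r_power[unfolded r_def])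
    also have "\<dots> \<le> (r^2)^2 * (u \<bullet> u) * (K * (Xn^2)^(p-2))"
    proof (rule mult_left_mono[OF mult_power_le_mult_power])
      show "\<kappa> \<le> K" using scalar by (simp add: \<kappa>_def K_def)
      show "r^2 \<le> Xn^2" using Xn by (intro power_mono) (auto simp: r_def)
    qed (auto simp: K0)
    also have "\<dots> \<le> (r^2)^2 * (v \<bullet> v) * (K * (Xn^2)^(p-2))"
      using norm_transpose_isometry_le[OF WW, of v] K0
      by (intro mult_right_mono mult_left_mono) (auto simp: u_def norm_eq_sqrt_inner)
    also have "\<dots> = (fact p / 2 * (12 * q * Xn^2) ^ (p - 2)) * (48 * md ^ 2 / Dd ^ 3) * (r^2)^2 * (v \<bullet> v)"
      by (simp add: K_def power_mult_distrib)
    also have "\<dots> = v \<bullet> (((fact p / 2 * Rk 2 md Dd Xn ^ (p - 2)) *\<^sub>R Asq 2 md Dd x) *v v)"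
      by (simp add: Asq_def S2_def Rk_def scaleR_matrix_vector_mult q_def r_def)
    finally show "v \<bullet> (expectation (\<lambda>z. matpow (Ymat 2 (w z) (\<alpha> z) W x - (r^2 * c) *\<^sub>R (W ** transpose W)) p) *v v)
        \<le> v \<bullet> (((fact p / 2 * Rk 2 md Dd Xn ^ (p - 2)) *\<^sub>R Asq 2 md Dd x) *v v)" .
  qed
qed

lemma expectation_even_power_quadratic:
  fixes f :: "real \<Rightarrow> real"
  assumes f: "continuous_on UNIV f" and p: "p = 2 * j" "j \<ge> 1"
  shows "expectation (\<lambda>z. (f (w z) * r) ^ p * (r^2) ^ (j - 1) * (A + r^2 * ((\<alpha> z \<bullet> u) * (\<alpha> z \<bullet> u))))
       = expectation (\<lambda>z. f (w z) ^ p) * (r^2) ^ (p - 2) * (r^2 * A + (r^2)^2 * ((u \<bullet> u) / CARD('e)))"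
proof -
  have r: "r ^ p * (r^2) ^ (j - 1) = r^2 * (r^2) ^ (p - 2)"
  proof -
    have "r ^ p * (r^2) ^ (j - 1) = (r^2) ^ (j + (j - 1))" by (simp add: p power_mult power_add)
    also have "j + (j - 1) = 1 + (p - 2)" using p by simp
    finally show ?thesis by (simp add: power_add)
  qed
  have "expectation (\<lambda>z. (f (w z) * r) ^ p * (r^2) ^ (j - 1) * (A + r^2 * ((\<alpha> z \<bullet> u) * (\<alpha> z \<bullet> u))))
      = expectation (\<lambda>z. (r^2 * (r^2) ^ (p - 2)) *
          (A * f (w z) ^ p + r^2 * (f (w z) ^ p * ((\<alpha> z \<bullet> u) * (\<alpha> z \<bullet> u)))))"
    by (rule Bochner_Integration.integral_cong[OF refl]) (simp add: power_mult_distrib r[symmetric] algebra_simps)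
  also have "\<dots> = (r^2 * (r^2) ^ (p - 2)) *
      (A * expectation (\<lambda>z. f (w z) ^ p) + r^2 * (expectation (\<lambda>z. f (w z) ^ p) * ((u \<bullet> u) / CARD('e))))"
  proof -
    have "integrable M (\<lambda>z. f (w z) ^ p)" by (rule integrable_continuous_w) (intro continuous_intros f)
    moreover have "integrable M (\<lambda>z. f (w z) ^ p * ((\<alpha> z \<bullet> u) * (\<alpha> z \<bullet> u)))"
      using integrable_continuous_pair[of "\<lambda>s a. f s ^ p * ((a \<bullet> u) * (a \<bullet> u))"]
      by (simp add: continuous_intros continuous_on_compose2[OF f])
    moreover have "expectation (\<lambda>z. f (w z) ^ p * ((\<alpha> z \<bullet> u) * (\<alpha> z \<bullet> u)))
        = expectation (\<lambda>z. f (w z) ^ p) * ((u \<bullet> u) / CARD('e))"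
      by (rule expectation_mult_inner_inner) (intro continuous_intros f)
    ultimately show ?thesis by simp
  qed
  also have "\<dots> = expectation (\<lambda>z. f (w z) ^ p) * (r^2) ^ (p - 2) * (r^2 * A + (r^2)^2 * ((u \<bullet> u) / CARD('e)))"
    by (simp add: algebra_simps power2_eq_square)
  finally show ?thesis .
qed

lemma quadratic_form_moment_Y3:
  fixes W :: "real^'e^'d" and x v :: "real^'d"
  assumes WW: "transpose W ** W = mat 1" and perp: "\<And>a. x \<bullet> (W *v a) = 0" and p: "p \<ge> 2"
  defines "u \<equiv> transpose W *v v"
  shows "v \<bullet> (expectation (\<lambda>z. matpow (Ymat 3 (w z) (\<alpha> z) W x) p) *v v)
       = (if even p then expectation (\<lambda>z. (w z * sqrt (w z - w z ^ 2)) ^ p) * (norm x ^ 2) ^ (p - 2) *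
            (norm x ^ 2 * ((x \<bullet> v) * (x \<bullet> v)) + (norm x ^ 2)^2 * ((u \<bullet> u) / CARD('e)))
          else 0)"
proof -
  define g where "g s = s * sqrt (s - s^2)" for s
  define r where "r = norm x"
  have integrable: "integrable M (\<lambda>z. matpow (Ymat 3 (w z) (\<alpha> z) W x) p)"
    by (rule integrable_continuous_pair[of "\<lambda>s a. matpow (Ymat 3 s a W x) p"]) (intro continuous_intros)
  have "v \<bullet> (expectation (\<lambda>z. matpow (Ymat 3 (w z) (\<alpha> z) W x) p) *v v)
      = expectation (\<lambda>z. v \<bullet> (matpow (Ymat 3 (w z) (\<alpha> z) W x) p *v v))"
    by (rule expectation_quadratic_form[OF integrable])
  also have "\<dots> = expectation (\<lambda>z. (g (w z) * r) ^ p *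
      (if even p then (r^2) ^ (p div 2 - 1) * ((x \<bullet> v) * (x \<bullet> v) + r^2 * ((\<alpha> z \<bullet> u) * (\<alpha> z \<bullet> u)))
       else (r^2) ^ (p div 2) * (2 * (x \<bullet> v)) * (\<alpha> z \<bullet> u)))"
    using p by (intro expectation_cong_unit_direction)
      (auto simp: quadratic_form_matpow_Y3[OF WW _ perp] g_def r_def u_def intro!: continuous_intros)
  also have "\<dots> = (if even p then expectation (\<lambda>z. g (w z) ^ p) * (r^2) ^ (p - 2) *
      (r^2 * ((x \<bullet> v) * (x \<bullet> v)) + (r^2)^2 * ((u \<bullet> u) / CARD('e))) else 0)"
  proof (cases "even p")
    case True
    then obtain j where j: "p = 2 * j" by blast
    with p have "j \<ge> 1" by simp
    with j True show ?thesis
      using expectation_even_power_quadratic[of g p j r "(x \<bullet> v) * (x \<bullet> v)" u]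
      by (simp add: g_def continuous_intros mult.assoc)
  next
    case False
    have "expectation (\<lambda>z. (g (w z) * r) ^ p * ((r^2) ^ (p div 2) * (2 * (x \<bullet> v))) * (\<alpha> z \<bullet> u)) = 0"
      by (rule expectation_mult_inner) (simp add: g_def continuous_intros)
    with False show ?thesis by (simp add: mult.assoc)
  qed
  finally show ?thesis by (simp add: g_def r_def)
qed

lemma Y3_central_moment_loewner:
  fixes W :: "real^'e^'d" and x :: "real^'d" and md Dd Xn :: real
  defines "q \<equiv> md / Dd"
  assumes p: "p \<ge> 2" and Xn: "norm x \<le> Xn" and q_pos: "q > 0"
    and card: "real CARD('e) = Dd - 1" and WW: "transpose W ** W = mat 1"
    and perp: "\<And>a. x \<bullet> (W *v a) = 0"
    and scalar: "expectation (\<lambda>z. (w z * sqrt (w z - w z ^ 2)) ^ p)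
          \<le> fact p / 2 * (10 * q) ^ (p - 2) * (15 * md ^ 3 / Dd ^ 3)"
  shows "loewner_le
     (expectation (\<lambda>z. matpow (Ymat 3 (w z) (\<alpha> z) W x - expectation (\<lambda>z'. Ymat 3 (w z') (\<alpha> z') W x)) p))
     ((fact p / 2 * Rk 3 md Dd Xn ^ (p - 2)) *\<^sub>R Asq 3 md Dd x)"
proof -
  define r where "r = norm x"
  define G where "G = expectation (\<lambda>z. (w z * sqrt (w z - w z ^ 2)) ^ p)"
  define K where "K = fact p / 2 * (10 * q) ^ (p - 2) * (15 * md ^ 3 / Dd ^ 3)"
  have D1: "Dd - 1 \<ge> 1" using card zero_less_card_finite[where 'a='e] by linarith
  have K0: "K \<ge> 0" using q_pos D1 by (simp add: K_def q_def zero_less_divide_iff)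
  show ?thesis
    unfolding expectation_Y3 diff_zero
  proof (rule loewner_leI)
    fix v :: "real^'d"
    define u where "u = transpose W *v v"
    define B where "B = r^2 * ((x \<bullet> v) * (x \<bullet> v)) + (r^2)^2 * ((2 / Dd) * (v \<bullet> v))"
    have B0: "0 \<le> B" using D1 by (simp add: B_def)
    have "v \<bullet> (expectation (\<lambda>z. matpow (Ymat 3 (w z) (\<alpha> z) W x) p) *v v) \<le> K * (Xn^2) ^ (p - 2) * B"
    proof (cases "even p")
      case True
      have "v \<bullet> (expectation (\<lambda>z. matpow (Ymat 3 (w z) (\<alpha> z) W x) p) *v v)
          = G * (r^2) ^ (p - 2) * (r^2 * ((x \<bullet> v) * (x \<bullet> v)) + (r^2)^2 * ((u \<bullet> u) / (Dd - 1)))"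
        using quadratic_form_moment_Y3[OF WW perp p, of v] True card by (simp add: G_def r_def u_def)
      also have "\<dots> \<le> K * (Xn^2) ^ (p - 2) * B"
        unfolding B_def
      proof (rule mult_mono)
        show "G * (r^2) ^ (p - 2) \<le> K * (Xn^2) ^ (p - 2)"
          using scalar K0 Xn by (intro mult_power_le_mult_power power_mono) (auto simp: G_def K_def r_def)
        have "u \<bullet> u \<le> v \<bullet> v"
          using norm_transpose_isometry_le[OF WW, of v] by (simp add: u_def norm_eq_sqrt_inner)
        then have "(u \<bullet> u) / (Dd - 1) \<le> (v \<bullet> v) * (1 / (Dd - 1))"
          using D1 by (simp add: divide_right_mono)
        also have "\<dots> \<le> (v \<bullet> v) * (2 / Dd)"
          by (rule mult_left_mono) (use D1 in \<open>simp_all add: field_simps\<close>)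
        finally have "(u \<bullet> u) / (Dd - 1) \<le> (2 / Dd) * (v \<bullet> v)" by (simp add: mult.commute)
        then show "r^2 * ((x \<bullet> v) * (x \<bullet> v)) + (r^2)^2 * ((u \<bullet> u) / (Dd - 1))
            \<le> r^2 * ((x \<bullet> v) * (x \<bullet> v)) + (r^2)^2 * ((2 / Dd) * (v \<bullet> v))"
          by (intro add_left_mono mult_left_mono) auto
      qed (use K0 D1 in \<open>auto intro!: add_nonneg_nonneg\<close>)
      finally show ?thesis .
    next
      case False
      then show ?thesis
        using quadratic_form_moment_Y3[OF WW perp p, of v] K0 B0 by simp
    qed
    also have "\<dots> = v \<bullet> (((fact p / 2 * Rk 3 md Dd Xn ^ (p - 2)) *\<^sub>R Asq 3 md Dd x) *v v)"
      unfolding B_def K_def using D1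
      by (simp add: Asq_def S2_def S1_def Rk_def scaleR_matrix_vector_mult matrix_vector_mult_add_rdistrib
          inner_add_right quadratic_form_outer q_def r_def power2_eq_square power4_eq_xxxx
          power_mult_distrib field_simps)
    finally show "v \<bullet> (expectation (\<lambda>z. matpow (Ymat 3 (w z) (\<alpha> z) W x) p) *v v)
        \<le> v \<bullet> (((fact p / 2 * Rk 3 md Dd Xn ^ (p - 2)) *\<^sub>R Asq 3 md Dd x) *v v)" .
  qed
qed

end

theorem lemma3:
  fixes M :: "'a measure"
    and x :: "'n::finite \<Rightarrow> real^'d::finite"
    and W :: "'n \<Rightarrow> real^'e::finite^'d"
    and \<omega> :: "'n \<Rightarrow> 'a \<Rightarrow> real"
    and \<alpha> :: "'n \<Rightarrow> 'a \<Rightarrow> real^'e"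
    and m p k :: nat and t :: 'n
  assumes "prob_space M"
    and "CARD('d) \<ge> 2"
    and "CARD('e) + 1 = CARD('d)"
    and "1 \<le> m" and "m \<le> CARD('d)"
    and "\<forall>s. x s \<noteq> 0"
    and "\<forall>s. prob_space.beta_distributed M (\<omega> s) (real m / 2) ((real CARD('d) - real m) / 2)"
    and "\<forall>s. \<alpha> s \<in> borel_measurable M \<and> distr M borel (\<alpha> s) = uniform_sphere"
    and "\<forall>s. \<forall>A\<in>sets (borel :: real measure). \<forall>B\<in>sets (borel :: (real^'e) measure).
         measure M ((\<omega> s) -` A \<inter> (\<alpha> s) -` B \<inter> space M)
         = measure M ((\<omega> s) -` A \<inter> space M) * measure M ((\<alpha> s) -` B \<inter> space M)"
    and "\<forall>s. transpose (W s) ** W s = mat 1"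
    and "\<forall>s. span (columns (W s)) = {v. v \<bullet> x s = 0}"
    and "p \<ge> 2"
    and "k \<in> {1, 2, 3}"
  shows "loewner_le
     (prob_space.expectation M (\<lambda>z. matpow
        (Ymat k (\<omega> t z) (\<alpha> t z) (W t) (x t)
         - prob_space.expectation M (\<lambda>z'. Ymat k (\<omega> t z') (\<alpha> t z') (W t) (x t))) p))
     ((fact p / 2 * Rk k (real m) (real CARD('d)) (Max (range (\<lambda>s. norm (x s)))) ^ (p - 2))
        *\<^sub>R Asq k (real m) (real CARD('d)) (x t))"
proof -
  interpret prob_space M by (rule assms(1))
  have beta: "beta_distributed (\<omega> t) (real m / 2) ((real CARD('d) - real m) / 2)" using assms(7) by simp
  have b_nonneg: "(real CARD('d) - real m) / 2 \<ge> 0" using assms(5) by simp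
  interpret wd: weight_direction M "\<omega> t" "\<alpha> t"
    using assms(8,9) beta_distributed_measurable[OF beta] beta_distributed_AE_unit_interval[OF beta b_nonneg]
    by unfold_locales blast+
  interpret bm: beta_moment_recursion M "\<omega> t" m "CARD('d)"
    using assms(2,4,5) beta_distributed_measurable[OF beta] beta_distributed_AE_unit_interval[OF beta b_nonneg]
      beta_moment_Suc[OF beta _ b_nonneg]
    by unfold_locales auto
  have Xn: "norm (x t) \<le> Max (range (\<lambda>s. norm (x s)))" by (rule Max_ge) auto
  have q: "real m / real CARD('d) > 0" using assms(4) by simp
  have card: "real CARD('e) = real CARD('d) - 1" using assms(3) by linarith
  have WW: "transpose (W t) ** W t = mat 1" using assms(10) by simp
  have perp: "\<And>a. x t \<bullet> (W t *v a) = 0" using inner_matrix_vector_eq_0_if_span_columns assms(11) by blast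
  from assms(13) consider "k = 1" | "k = 2" | "k = 3" by auto
  then show ?thesis
  proof cases
    case 1
    show ?thesis unfolding 1
      by (rule wd.Y1_central_moment_loewner[OF assms(12) Xn q])
         (use bm.central_moment_X_square_le[OF assms(12)] in \<open>simp add: bm.q_def\<close>)
  next
    case 2
    show ?thesis unfolding 2
      by (rule wd.Y2_central_moment_loewner[OF assms(12) Xn q card WW])
         (use bm.Y2_scalar_moment_le[OF assms(12)] in \<open>simp add: bm.q_def\<close>)
  next
    case 3
    show ?thesis unfolding 3
      by (rule wd.Y3_central_moment_loewner[OF assms(12) Xn q card WW perp])
         (use bm.moment_X_sqrt_le[OF assms(12)] in \<open>simp add: bm.q_def\<close>)
  qed
qed

end
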